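(* Let $R$ be a commutative noetherian ring, $\mathcal A$ an abelian $R$-linear category and $T:\mathcal A\to R\text{-Mod}$ a faithful, exact, $R$-linear functor into finitely generated $R$-modules. Let $\mathcal A\xrightarrow{\tilde T}\mathcal C(T_{\mathcal A})\xrightarrow{ff_T}R\text{-Mod}$ be the factorization of $T$ through its diagram category. Then the functor $\tilde T$ is full.
   Context: For a representation $T$ of a diagram in $R\text{-Mod}$ and a finite full subdiagram $F$, $\mathrm{End}(T_F):=\{(e_p)_{p\in F}\in\prod_{p\in F}\mathrm{End}_R(Tp): Tm\circ e_p=e_q\circ Tm$ for all edges $m:p\to q$ in $F\}$. For finite $F\subset F'$ restriction of scalars along the projection $\mathrm{End}(T_{F'})\to\mathrm{End}(T_F)$ gives functors between the categories of finitely generated left modules, and $\mathcal C(T)=\varinjlim_F\mathrm{End}(T_F)\text{-Mod}$ is the direct limit of categories over finite full subdiagrams. $\tilde T$ sends $p$ to $Tp$ with its natural module structure; $ff_T$ forgets the module structure. Here $\mathcal A$ is regarded as a diagram whose objects are those of $\mathcal A$ and whose edges are its morphisms. *)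

theory Defs
  imports "HOL-Algebra.Module" "HOL-Algebra.Ring_Divisibility"
begin

record ('o, 'm, 'r) lincat =
  Obj   :: "'o set"
  Hom   :: "'o \<Rightarrow> 'o \<Rightarrow> 'm set"
  comp  :: "'m \<Rightarrow> 'm \<Rightarrow> 'm"     (* comp g f = g \<circ> f *)
  ident :: "'o \<Rightarrow> 'm"
  hadd  :: "'m \<Rightarrow> 'm \<Rightarrow> 'm"
  hzero :: "'o \<Rightarrow> 'o \<Rightarrow> 'm"
  hsmult :: "'r \<Rightarrow> 'm \<Rightarrow> 'm"

definition hom_module :: "('o, 'm, 'r) lincat \<Rightarrow> 'o \<Rightarrow> 'o \<Rightarrow> ('r, 'm) module" where
  "hom_module C X Y = \<lparr>carrier = Hom C X Y, monoid.mult = (\<lambda>_ _. undefined), one = undefined,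
     zero = hzero C X Y, add = hadd C, smult = hsmult C\<rparr>"

definition is_category :: "('o, 'm, 'r) lincat \<Rightarrow> bool" where
  "is_category C \<longleftrightarrow>
     (\<forall>X Y f. f \<in> Hom C X Y \<longrightarrow> X \<in> Obj C \<and> Y \<in> Obj C) \<and>
     (\<forall>X Y X' Y' f. f \<in> Hom C X Y \<and> f \<in> Hom C X' Y' \<longrightarrow> X = X' \<and> Y = Y') \<and>
     (\<forall>X \<in> Obj C. ident C X \<in> Hom C X X) \<and>
     (\<forall>X Y Z f g. f \<in> Hom C X Y \<and> g \<in> Hom C Y Z \<longrightarrow> comp C g f \<in> Hom C X Z) \<and>
     (\<forall>X Y Z W f g h. f \<in> Hom C X Y \<and> g \<in> Hom C Y Z \<and> h \<in> Hom C Z W \<longrightarrow>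
         comp C h (comp C g f) = comp C (comp C h g) f) \<and>
     (\<forall>X Y f. f \<in> Hom C X Y \<longrightarrow> comp C f (ident C X) = f \<and> comp C (ident C Y) f = f)"

definition is_R_linear_category :: "('r, 'x) ring_scheme \<Rightarrow> ('o, 'm, 'r) lincat \<Rightarrow> bool" where
  "is_R_linear_category R C \<longleftrightarrow> is_category C \<and>
     (\<forall>X \<in> Obj C. \<forall>Y \<in> Obj C. module R (hom_module C X Y)) \<and>
     (\<forall>X Y Z f f' g g'. f \<in> Hom C X Y \<and> f' \<in> Hom C X Y \<and> g \<in> Hom C Y Z \<and> g' \<in> Hom C Y Z \<longrightarrow>
         comp C (hadd C g g') f = hadd C (comp C g f) (comp C g' f) \<and>
         comp C g (hadd C f f') = hadd C (comp C g f) (comp C g f')) \<and>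
     (\<forall>X Y Z f g r. f \<in> Hom C X Y \<and> g \<in> Hom C Y Z \<and> r \<in> carrier R \<longrightarrow>
         comp C (hsmult C r g) f = hsmult C r (comp C g f) \<and>
         comp C g (hsmult C r f) = hsmult C r (comp C g f))"

definition is_kernel :: "('o, 'm, 'r) lincat \<Rightarrow> 'o \<Rightarrow> 'o \<Rightarrow> 'm \<Rightarrow> 'o \<Rightarrow> 'm \<Rightarrow> bool" where
  "is_kernel C X Y f K k \<longleftrightarrow> K \<in> Obj C \<and> k \<in> Hom C K X \<and> comp C f k = hzero C K Y \<and>
     (\<forall>W \<in> Obj C. \<forall>h \<in> Hom C W X. comp C f h = hzero C W Y \<longrightarrow> (\<exists>!u. u \<in> Hom C W K \<and> comp C k u = h))"

definition is_cokernel :: "('o, 'm, 'r) lincat \<Rightarrow> 'o \<Rightarrow> 'o \<Rightarrow> 'm \<Rightarrow> 'o \<Rightarrow> 'm \<Rightarrow> bool" where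
  "is_cokernel C X Y f Q q \<longleftrightarrow> Q \<in> Obj C \<and> q \<in> Hom C Y Q \<and> comp C q f = hzero C X Q \<and>
     (\<forall>W \<in> Obj C. \<forall>h \<in> Hom C Y W. comp C h f = hzero C X W \<longrightarrow> (\<exists>!u. u \<in> Hom C Q W \<and> comp C u q = h))"

definition is_mono :: "('o, 'm, 'r) lincat \<Rightarrow> 'o \<Rightarrow> 'o \<Rightarrow> 'm \<Rightarrow> bool" where
  "is_mono C X Y m \<longleftrightarrow> m \<in> Hom C X Y \<and>
     (\<forall>W \<in> Obj C. \<forall>g \<in> Hom C W X. \<forall>h \<in> Hom C W X. comp C m g = comp C m h \<longrightarrow> g = h)"

definition is_epi :: "('o, 'm, 'r) lincat \<Rightarrow> 'o \<Rightarrow> 'o \<Rightarrow> 'm \<Rightarrow> bool" where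
  "is_epi C X Y e \<longleftrightarrow> e \<in> Hom C X Y \<and>
     (\<forall>W \<in> Obj C. \<forall>g \<in> Hom C Y W. \<forall>h \<in> Hom C Y W. comp C g e = comp C h e \<longrightarrow> g = h)"

definition is_abelian_R_linear_category :: "('r, 'x) ring_scheme \<Rightarrow> ('o, 'm, 'r) lincat \<Rightarrow> bool" where
  "is_abelian_R_linear_category R C \<longleftrightarrow> is_R_linear_category R C \<and>
     \<comment> \<open>zero object\<close>
     (\<exists>Z \<in> Obj C. \<forall>X \<in> Obj C. (\<exists>!u. u \<in> Hom C X Z) \<and> (\<exists>!u. u \<in> Hom C Z X)) \<and>
     \<comment> \<open>binary biproducts\<close>
     (\<forall>X \<in> Obj C. \<forall>Y \<in> Obj C. \<exists>P i1 i2 p1 p2. P \<in> Obj C \<and>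
        i1 \<in> Hom C X P \<and> i2 \<in> Hom C Y P \<and> p1 \<in> Hom C P X \<and> p2 \<in> Hom C P Y \<and>
        comp C p1 i1 = ident C X \<and> comp C p2 i2 = ident C Y \<and>
        comp C p1 i2 = hzero C Y X \<and> comp C p2 i1 = hzero C X Y \<and>
        hadd C (comp C i1 p1) (comp C i2 p2) = ident C P) \<and>
     \<comment> \<open>kernels and cokernels exist\<close>
     (\<forall>X Y f. f \<in> Hom C X Y \<longrightarrow> (\<exists>K k. is_kernel C X Y f K k) \<and> (\<exists>Q q. is_cokernel C X Y f Q q)) \<and>
     \<comment> \<open>every mono is a kernel, every epi is a cokernel\<close>
     (\<forall>X Y m. is_mono C X Y m \<longrightarrow> (\<exists>Z g. g \<in> Hom C Y Z \<and> is_kernel C Y Z g X m)) \<and>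
     (\<forall>X Y e. is_epi C X Y e \<longrightarrow> (\<exists>Z g. g \<in> Hom C Z X \<and> is_cokernel C Z X g Y e))"

definition lin_map :: "('r, 'x) ring_scheme \<Rightarrow> ('r, 'v) module \<Rightarrow> ('r, 'v) module \<Rightarrow> ('v \<Rightarrow> 'v) \<Rightarrow> bool" where
  "lin_map R M N h \<longleftrightarrow> (\<forall>x \<in> carrier M. h x \<in> carrier N) \<and>
     (\<forall>x \<in> carrier M. \<forall>y \<in> carrier M. h (x \<oplus>\<^bsub>M\<^esub> y) = h x \<oplus>\<^bsub>N\<^esub> h y) \<and>
     (\<forall>r \<in> carrier R. \<forall>x \<in> carrier M. h (r \<odot>\<^bsub>M\<^esub> x) = r \<odot>\<^bsub>N\<^esub> h x)"

definition finitely_generated :: "('r, 'x) ring_scheme \<Rightarrow> ('r, 'v) module \<Rightarrow> bool" where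
  "finitely_generated R M \<longleftrightarrow> (\<exists>S. finite S \<and> S \<subseteq> carrier M \<and>
     (\<forall>x \<in> carrier M. \<exists>c. c \<in> S \<rightarrow> carrier R \<and> x = finsum M (\<lambda>s. c s \<odot>\<^bsub>M\<^esub> s) S))"

definition is_fiber_functor ::
  "('r, 'x) ring_scheme \<Rightarrow> ('o, 'm, 'r) lincat \<Rightarrow> ('o \<Rightarrow> ('r, 'v) module) \<Rightarrow> ('m \<Rightarrow> 'v \<Rightarrow> 'v) \<Rightarrow> bool" where
  "is_fiber_functor R C TO TM \<longleftrightarrow>
     \<comment> \<open>values are finitely generated R-modules\<close>
     (\<forall>X \<in> Obj C. module R (TO X) \<and> finitely_generated R (TO X)) \<and>
     \<comment> \<open>functor\<close>
     (\<forall>X Y f. f \<in> Hom C X Y \<longrightarrow> lin_map R (TO X) (TO Y) (TM f)) \<and>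
     (\<forall>X \<in> Obj C. \<forall>v \<in> carrier (TO X). TM (ident C X) v = v) \<and>
     (\<forall>X Y Z f g. f \<in> Hom C X Y \<and> g \<in> Hom C Y Z \<longrightarrow>
        (\<forall>v \<in> carrier (TO X). TM (comp C g f) v = TM g (TM f v))) \<and>
     \<comment> \<open>R-linear\<close>
     (\<forall>X Y f g. f \<in> Hom C X Y \<and> g \<in> Hom C X Y \<longrightarrow>
        (\<forall>v \<in> carrier (TO X). TM (hadd C f g) v = TM f v \<oplus>\<^bsub>TO Y\<^esub> TM g v)) \<and>
     (\<forall>X Y f r. f \<in> Hom C X Y \<and> r \<in> carrier R \<longrightarrow>
        (\<forall>v \<in> carrier (TO X). TM (hsmult C r f) v = r \<odot>\<^bsub>TO Y\<^esub> TM f v)) \<and>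
     \<comment> \<open>faithful\<close>
     (\<forall>X Y f g. f \<in> Hom C X Y \<and> g \<in> Hom C X Y \<and> (\<forall>v \<in> carrier (TO X). TM f v = TM g v) \<longrightarrow> f = g) \<and>
     \<comment> \<open>exact: short exact sequences go to short exact sequences\<close>
     (\<forall>X Y Z f g. f \<in> Hom C X Y \<and> g \<in> Hom C Y Z \<and> is_kernel C Y Z g X f \<and> is_cokernel C X Y f Z g \<longrightarrow>
        inj_on (TM f) (carrier (TO X)) \<and> TM g ` carrier (TO Y) = carrier (TO Z) \<and>
        {y \<in> carrier (TO Y). TM g y = \<zero>\<^bsub>TO Z\<^esub>} = TM f ` carrier (TO X))"

text \<open>Elements of End(T_F): families (e_p)_{p \<in> F} of R-linear endomorphisms of T p
  compatible with all edges (morphisms) between objects of F.\<close>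
definition End_TF ::
  "('r, 'x) ring_scheme \<Rightarrow> ('o, 'm, 'r) lincat \<Rightarrow> ('o \<Rightarrow> ('r, 'v) module) \<Rightarrow> ('m \<Rightarrow> 'v \<Rightarrow> 'v)
     \<Rightarrow> 'o set \<Rightarrow> ('o \<Rightarrow> 'v \<Rightarrow> 'v) set" where
  "End_TF R C TO TM F = {e. (\<forall>p \<in> F. lin_map R (TO p) (TO p) (e p)) \<and>
     (\<forall>p \<in> F. \<forall>q \<in> F. \<forall>m \<in> Hom C p q. \<forall>v \<in> carrier (TO p). TM m (e p v) = e q (TM m v))}"

text \<open>Morphisms T-tilde X \<rightarrow> T-tilde Y in the direct limit category C(T): maps TX \<rightarrow> TY that are
  End(T_F)-linear for some finite full subdiagram F containing X and Y.\<close>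
definition CT_hom ::
  "('r, 'x) ring_scheme \<Rightarrow> ('o, 'm, 'r) lincat \<Rightarrow> ('o \<Rightarrow> ('r, 'v) module) \<Rightarrow> ('m \<Rightarrow> 'v \<Rightarrow> 'v)
     \<Rightarrow> 'o \<Rightarrow> 'o \<Rightarrow> ('v \<Rightarrow> 'v) set" where
  "CT_hom R C TO TM X Y = {\<phi>. \<exists>F. finite F \<and> F \<subseteq> Obj C \<and> X \<in> F \<and> Y \<in> F \<and>
     lin_map R (TO X) (TO Y) \<phi> \<and>
     (\<forall>e \<in> End_TF R C TO TM F. \<forall>v \<in> carrier (TO X). \<phi> (e X v) = e Y (\<phi> v))}"

definition Ttilde_full ::
  "('r, 'x) ring_scheme \<Rightarrow> ('o, 'm, 'r) lincat \<Rightarrow> ('o \<Rightarrow> ('r, 'v) module) \<Rightarrow> ('m \<Rightarrow> 'v \<Rightarrow> 'v) \<Rightarrow> bool" where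
  "Ttilde_full R C TO TM \<longleftrightarrow> (\<forall>X \<in> Obj C. \<forall>Y \<in> Obj C. \<forall>\<phi> \<in> CT_hom R C TO TM X Y.
     \<exists>g \<in> Hom C X Y. \<forall>v \<in> carrier (TO X). TM g v = \<phi> v)"

end

theory Submission
  imports Defs
begin

text \<open>
  An \<open>End(T\<^sub>F)\<close>-linear map \<open>\<phi> : T X \<rightarrow> T Y\<close> transports, via the biproduct \<open>W\<close> of the finite
  diagram \<open>F\<close>, to an endomorphism of \<open>T W\<close> commuting with every endomorphism that commutes with
  \<open>T(End W)\<close>; so it suffices to prove a double centralizer theorem for a single object \<open>W\<close>.

  For this, pick generators of \<open>T W\<close> and assemble them into one element \<open>v \<in> T(W\<^sup>n)\<close>; then every
  element of \<open>T W\<close> has the form \<open>T h v\<close>. As \<open>R\<close> is noetherian and \<open>T\<close> embeds \<open>Hom(W\<^sup>n, W)\<close> into a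
  finitely generated module, the annihilator of \<open>v\<close> in \<open>Hom(W\<^sup>n, W)\<close> is finitely generated, and
  exactness of \<open>T\<close> yields \<open>\<sigma> : P \<rightarrow> W\<^sup>n\<close> whose \<open>T\<close>-image is the common kernel of that annihilator.
  For \<open>w\<close> in this image, \<open>T h v \<mapsto> T h w\<close> is a well-defined endomorphism of \<open>T W\<close> commuting with
  \<open>T(End W)\<close>, hence with \<open>\<phi>\<close>. This produces \<open>\<alpha>, \<beta> : P\<^sup>n \<rightarrow> W\<close> with \<open>T \<beta> = \<phi> \<circ> T \<alpha>\<close> and \<open>T \<alpha>\<close>
  surjective; since \<open>T\<close> is faithful, \<open>\<alpha>\<close> is an epimorphism, hence the cokernel of its kernel, and
  \<open>\<beta>\<close> factors as \<open>u \<circ> \<alpha>\<close> with \<open>T u = \<phi>\<close>.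
\<close>


section \<open>Linear maps, submodules and spans\<close>

text \<open>\<open>lin_map\<close> with domain and codomain of possibly different carrier types, as needed for
  maps out of hom-modules.\<close>
definition linear_map ::
  "('r, 'x) ring_scheme \<Rightarrow> ('r, 'a, 'c) module_scheme \<Rightarrow> ('r, 'b, 'd) module_scheme \<Rightarrow> ('a \<Rightarrow> 'b) \<Rightarrow> bool" where
  "linear_map R M N h \<longleftrightarrow> (\<forall>x \<in> carrier M. h x \<in> carrier N) \<and>
     (\<forall>x \<in> carrier M. \<forall>y \<in> carrier M. h (x \<oplus>\<^bsub>M\<^esub> y) = h x \<oplus>\<^bsub>N\<^esub> h y) \<and>
     (\<forall>r \<in> carrier R. \<forall>x \<in> carrier M. h (r \<odot>\<^bsub>M\<^esub> x) = r \<odot>\<^bsub>N\<^esub> h x)"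

lemma lin_map_eq_linear_map: "lin_map R M N h = linear_map R M N h"
  unfolding lin_map_def linear_map_def ..

lemma linear_mapI:
  assumes "\<And>x. x \<in> carrier M \<Longrightarrow> h x \<in> carrier N"
    and "\<And>x y. x \<in> carrier M \<Longrightarrow> y \<in> carrier M \<Longrightarrow> h (x \<oplus>\<^bsub>M\<^esub> y) = h x \<oplus>\<^bsub>N\<^esub> h y"
    and "\<And>r x. r \<in> carrier R \<Longrightarrow> x \<in> carrier M \<Longrightarrow> h (r \<odot>\<^bsub>M\<^esub> x) = r \<odot>\<^bsub>N\<^esub> h x"
  shows "linear_map R M N h"
  using assms unfolding linear_map_def by blast

lemma
  assumes "linear_map R M N h"
  shows linear_map_closed: "x \<in> carrier M \<Longrightarrow> h x \<in> carrier N"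
    and linear_map_add: "x \<in> carrier M \<Longrightarrow> y \<in> carrier M \<Longrightarrow> h (x \<oplus>\<^bsub>M\<^esub> y) = h x \<oplus>\<^bsub>N\<^esub> h y"
    and linear_map_smult: "r \<in> carrier R \<Longrightarrow> x \<in> carrier M \<Longrightarrow> h (r \<odot>\<^bsub>M\<^esub> x) = r \<odot>\<^bsub>N\<^esub> h x"
  using assms unfolding linear_map_def by blast+

lemma linear_map_cong:
  assumes "module R M" "\<And>x. x \<in> carrier M \<Longrightarrow> f x = g x"
  shows "linear_map R M N f = linear_map R M N g"
proof -
  interpret module R M by fact
  show ?thesis unfolding linear_map_def using assms(2) by simp
qed

lemma linear_map_zero:
  assumes "module R M" "module R N" "linear_map R M N h"
  shows "h \<zero>\<^bsub>M\<^esub> = \<zero>\<^bsub>N\<^esub>"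
proof -
  interpret M: module R M by fact
  interpret N: module R N by fact
  have "h (\<zero>\<^bsub>R\<^esub> \<odot>\<^bsub>M\<^esub> \<zero>\<^bsub>M\<^esub>) = \<zero>\<^bsub>R\<^esub> \<odot>\<^bsub>N\<^esub> h \<zero>\<^bsub>M\<^esub>"
    by (rule linear_map_smult[OF assms(3)]) simp_all
  then show ?thesis
    using linear_map_closed[OF assms(3) M.zero_closed] by simp
qed

lemma linear_map_compose:
  "linear_map R M N f \<Longrightarrow> linear_map R N K g \<Longrightarrow> linear_map R M K (\<lambda>x. g (f x))"
  by (intro linear_mapI) (simp_all add: linear_map_closed linear_map_add linear_map_smult)

lemma linear_map_finsum:
  assumes "module R M" "module R N" "linear_map R M N h" "finite A" "f \<in> A \<rightarrow> carrier M"
  shows "h (finsum M f A) = finsum N (\<lambda>a. h (f a)) A"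
  using assms(4,5)
proof (induction A rule: finite_induct)
  case empty
  interpret M: module R M by fact
  interpret N: module R N by fact
  show ?case using linear_map_zero[OF assms(1-3)] by simp
next
  case (insert a A)
  interpret M: module R M by fact
  interpret N: module R N by fact
  have hf: "(\<lambda>a. h (f a)) \<in> insert a A \<rightarrow> carrier N"
    using insert.prems linear_map_closed[OF assms(3)] by blast
  have "h (finsum M f (insert a A)) = h (f a \<oplus>\<^bsub>M\<^esub> finsum M f A)"
    using insert by simp
  also have "\<dots> = h (f a) \<oplus>\<^bsub>N\<^esub> finsum N (\<lambda>a. h (f a)) A"
    using insert linear_map_add[OF assms(3)] M.finsum_closed by simp
  finally show ?case
    using insert hf by simp
qed

lemma (in module) submoduleI_smult:
  assumes "H \<subseteq> carrier M" "\<zero>\<^bsub>M\<^esub> \<in> H"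
    and "\<And>a b. a \<in> H \<Longrightarrow> b \<in> H \<Longrightarrow> a \<oplus>\<^bsub>M\<^esub> b \<in> H"
    and "\<And>r a. r \<in> carrier R \<Longrightarrow> a \<in> H \<Longrightarrow> r \<odot>\<^bsub>M\<^esub> a \<in> H"
  shows "submodule H R M"
proof (rule submoduleI)
  fix a assume a: "a \<in> H"
  then have "(\<ominus>\<^bsub>R\<^esub> \<one>\<^bsub>R\<^esub>) \<odot>\<^bsub>M\<^esub> a \<in> H" using assms(4) by simp
  then show "\<ominus>\<^bsub>M\<^esub> a \<in> H" using a assms(1) by (auto simp: smult_l_minus)
qed (use assms in auto)

lemma (in module) submoduleD:
  assumes "submodule H R M"
  shows "H \<subseteq> carrier M" "\<zero>\<^bsub>M\<^esub> \<in> H"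
    "\<And>a b. a \<in> H \<Longrightarrow> b \<in> H \<Longrightarrow> a \<oplus>\<^bsub>M\<^esub> b \<in> H"
    "\<And>r a. r \<in> carrier R \<Longrightarrow> a \<in> H \<Longrightarrow> r \<odot>\<^bsub>M\<^esub> a \<in> H"
    "\<And>a b. a \<in> H \<Longrightarrow> b \<in> H \<Longrightarrow> a \<ominus>\<^bsub>M\<^esub> b \<in> H"
proof -
  show "H \<subseteq> carrier M" and add: "\<And>a b. a \<in> H \<Longrightarrow> b \<in> H \<Longrightarrow> a \<oplus>\<^bsub>M\<^esub> b \<in> H"
    and "\<And>r a. r \<in> carrier R \<Longrightarrow> a \<in> H \<Longrightarrow> r \<odot>\<^bsub>M\<^esub> a \<in> H"
    using submoduleE[OF assms] by auto
  show "\<zero>\<^bsub>M\<^esub> \<in> H"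
    using subgroup.one_closed[OF submodule.axioms(1)[OF assms]] by simp
  show "a \<ominus>\<^bsub>M\<^esub> b \<in> H" if "a \<in> H" "b \<in> H" for a b
    using add submoduleE(3)[OF assms] that unfolding a_minus_def by blast
qed

lemma linear_map_image_submodule:
  assumes "module R M" "module R N" "linear_map R M N h" "submodule P R M"
  shows "submodule (h ` P) R N"
proof -
  interpret M: module R M by fact
  interpret N: module R N by fact
  note P = M.submoduleD[OF assms(4)]
  note h = linear_map_closed[OF assms(3)] linear_map_add[OF assms(3)] linear_map_smult[OF assms(3)]
  show ?thesis
  proof (rule N.submoduleI_smult)
    show "h ` P \<subseteq> carrier N" using P(1) h(1) by blast
    show "\<zero>\<^bsub>N\<^esub> \<in> h ` P"
      using P(2) linear_map_zero[OF assms(1-3)] by (metis image_eqI)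
  next
    fix a b assume "a \<in> h ` P" "b \<in> h ` P"
    then obtain a' b' where "a' \<in> P" "b' \<in> P" "a = h a'" "b = h b'" by blast
    moreover from this have "a \<oplus>\<^bsub>N\<^esub> b = h (a' \<oplus>\<^bsub>M\<^esub> b')" using P(1) h(2) by (simp add: subset_iff)
    ultimately show "a \<oplus>\<^bsub>N\<^esub> b \<in> h ` P" using P(3) by blast
  next
    fix r a assume r: "r \<in> carrier R" and "a \<in> h ` P"
    then obtain a' where "a' \<in> P" "a = h a'" by blast
    moreover from this have "r \<odot>\<^bsub>N\<^esub> a = h (r \<odot>\<^bsub>M\<^esub> a')" using r P(1) h(3) by (simp add: subset_iff)
    ultimately show "r \<odot>\<^bsub>N\<^esub> a \<in> h ` P" using r P(4) by blast
  qed
qed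

lemma linear_map_kernel_submodule:
  assumes "module R M" "module R N" "linear_map R M N h"
  shows "submodule {x \<in> carrier M. h x = \<zero>\<^bsub>N\<^esub>} R M"
proof -
  interpret M: module R M by fact
  interpret N: module R N by fact
  show ?thesis
    using assms(3) linear_map_zero[OF assms] linear_map_closed[OF assms(3)]
    by (intro M.submoduleI_smult) (auto simp: linear_map_add linear_map_smult)
qed

inductive_set mspan :: "('r, 'x) ring_scheme \<Rightarrow> ('r, 'v, 'z) module_scheme \<Rightarrow> 'v set \<Rightarrow> 'v set"
  for R M S where
  span_zero: "\<zero>\<^bsub>M\<^esub> \<in> mspan R M S"
| span_gen: "s \<in> S \<Longrightarrow> s \<in> mspan R M S"
| span_add: "a \<in> mspan R M S \<Longrightarrow> b \<in> mspan R M S \<Longrightarrow> a \<oplus>\<^bsub>M\<^esub> b \<in> mspan R M S"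
| span_smult: "r \<in> carrier R \<Longrightarrow> a \<in> mspan R M S \<Longrightarrow> r \<odot>\<^bsub>M\<^esub> a \<in> mspan R M S"

lemma span_mono: "S \<subseteq> S' \<Longrightarrow> mspan R M S \<subseteq> mspan R M S'"
proof
  fix x assume "S \<subseteq> S'" "x \<in> mspan R M S"
  then show "x \<in> mspan R M S'"
    by (induction rule: mspan.induct[OF \<open>x \<in> mspan R M S\<close>]) (auto intro: mspan.intros)
qed

context module
begin

lemma span_least: "submodule N R M \<Longrightarrow> S \<subseteq> N \<Longrightarrow> mspan R M S \<subseteq> N"
proof
  fix x assume N: "submodule N R M" and "S \<subseteq> N" "x \<in> mspan R M S"
  then show "x \<in> N"
    by (induction rule: mspan.induct[OF \<open>x \<in> mspan R M S\<close>]) (use submoduleD[OF N] in blast)+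
qed

lemma span_submodule: "S \<subseteq> carrier M \<Longrightarrow> submodule (mspan R M S) R M"
proof (rule submoduleI_smult)
  assume S: "S \<subseteq> carrier M"
  show "mspan R M S \<subseteq> carrier M"
  proof
    fix x assume "x \<in> mspan R M S" then show "x \<in> carrier M"
      by (induction rule: mspan.induct) (use S in auto)
  qed
qed (auto intro: mspan.intros)

lemma span_closed: "S \<subseteq> carrier M \<Longrightarrow> mspan R M S \<subseteq> carrier M"
  using submoduleD(1)[OF span_submodule] .

lemma finsum_in_span:
  assumes "S \<subseteq> carrier M" "finite A" "f \<in> A \<rightarrow> mspan R M S"
  shows "finsum M f A \<in> mspan R M S"
  using assms(2,3)
proof (induction A rule: finite_induct)
  case (insert a A)
  then have "f \<in> insert a A \<rightarrow> carrier M" using span_closed[OF assms(1)] by blast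
  then show ?case using insert by (simp add: mspan.span_add)
qed (simp add: mspan.span_zero)

lemma span_insert:
  assumes G: "G \<subseteq> carrier M" and x: "x \<in> carrier M" and n: "n \<in> mspan R M (insert x G)"
  shows "\<exists>r \<in> carrier R. \<exists>y \<in> mspan R M G. n = r \<odot>\<^bsub>M\<^esub> x \<oplus>\<^bsub>M\<^esub> y"
proof -
  let ?N = "{r \<odot>\<^bsub>M\<^esub> x \<oplus>\<^bsub>M\<^esub> y | r y. r \<in> carrier R \<and> y \<in> mspan R M G}"
  note SG = submoduleD[OF span_submodule[OF G]]
  have "submodule ?N R M"
  proof (rule submoduleI_smult)
    show "?N \<subseteq> carrier M" using SG(1) x by auto
    have "\<zero>\<^bsub>M\<^esub> = \<zero>\<^bsub>R\<^esub> \<odot>\<^bsub>M\<^esub> x \<oplus>\<^bsub>M\<^esub> \<zero>\<^bsub>M\<^esub>" using x by simp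
    then show "\<zero>\<^bsub>M\<^esub> \<in> ?N" using SG(2) by blast
  next
    fix a b assume "a \<in> ?N" "b \<in> ?N"
    then obtain r y r' y' where a: "a = r \<odot>\<^bsub>M\<^esub> x \<oplus>\<^bsub>M\<^esub> y" "r \<in> carrier R" "y \<in> mspan R M G"
      and b: "b = r' \<odot>\<^bsub>M\<^esub> x \<oplus>\<^bsub>M\<^esub> y'" "r' \<in> carrier R" "y' \<in> mspan R M G" by blast
    then have "a \<oplus>\<^bsub>M\<^esub> b = (r \<oplus>\<^bsub>R\<^esub> r') \<odot>\<^bsub>M\<^esub> x \<oplus>\<^bsub>M\<^esub> (y \<oplus>\<^bsub>M\<^esub> y')"
      using SG(1) x by (simp add: smult_l_distr subset_iff a_ac)
    then show "a \<oplus>\<^bsub>M\<^esub> b \<in> ?N" using a b SG(3) by blast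
  next
    fix s a assume s: "s \<in> carrier R" and "a \<in> ?N"
    then obtain r y where a: "a = r \<odot>\<^bsub>M\<^esub> x \<oplus>\<^bsub>M\<^esub> y" "r \<in> carrier R" "y \<in> mspan R M G" by blast
    then have "s \<odot>\<^bsub>M\<^esub> a = (s \<otimes>\<^bsub>R\<^esub> r) \<odot>\<^bsub>M\<^esub> x \<oplus>\<^bsub>M\<^esub> (s \<odot>\<^bsub>M\<^esub> y)"
      using SG(1) x s by (simp add: smult_r_distr smult_assoc1 subset_iff)
    then show "s \<odot>\<^bsub>M\<^esub> a \<in> ?N" using a s SG(4) by blast
  qed
  moreover have "insert x G \<subseteq> ?N"
  proof
    fix z assume "z \<in> insert x G"
    moreover have "x = \<one>\<^bsub>R\<^esub> \<odot>\<^bsub>M\<^esub> x \<oplus>\<^bsub>M\<^esub> \<zero>\<^bsub>M\<^esub>" using x by simp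
    moreover have "z = \<zero>\<^bsub>R\<^esub> \<odot>\<^bsub>M\<^esub> x \<oplus>\<^bsub>M\<^esub> z" if "z \<in> G" using that G x by auto
    ultimately show "z \<in> ?N" using SG(2) by (blast intro: mspan.span_gen)
  qed
  ultimately show ?thesis using span_least n by blast
qed

lemma coefficient_ideal:
  assumes N: "submodule N R M" and L: "submodule L R M" and x: "x \<in> carrier M"
  shows "ideal {r \<in> carrier R. \<exists>y \<in> L. r \<odot>\<^bsub>M\<^esub> x \<oplus>\<^bsub>M\<^esub> y \<in> N} R"
proof (rule idealI)
  let ?I = "{r \<in> carrier R. \<exists>y \<in> L. r \<odot>\<^bsub>M\<^esub> x \<oplus>\<^bsub>M\<^esub> y \<in> N}"
  note N = submoduleD[OF N] and L = submoduleD[OF L]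
  show "ring R" ..
  show "subgroup ?I (add_monoid R)"
  proof (rule R.add.subgroupI)
    have "\<zero>\<^bsub>R\<^esub> \<odot>\<^bsub>M\<^esub> x \<oplus>\<^bsub>M\<^esub> \<zero>\<^bsub>M\<^esub> \<in> N" using x N(2) by simp
    then show "?I \<noteq> {}" using L(2) by blast
  next
    fix a assume "a \<in> ?I"
    then obtain y where a: "a \<in> carrier R" "y \<in> L" "a \<odot>\<^bsub>M\<^esub> x \<oplus>\<^bsub>M\<^esub> y \<in> N" by blast
    have "(\<ominus>\<^bsub>R\<^esub> a) \<odot>\<^bsub>M\<^esub> x \<oplus>\<^bsub>M\<^esub> (\<zero>\<^bsub>M\<^esub> \<ominus>\<^bsub>M\<^esub> y) = \<zero>\<^bsub>M\<^esub> \<ominus>\<^bsub>M\<^esub> (a \<odot>\<^bsub>M\<^esub> x \<oplus>\<^bsub>M\<^esub> y)"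
      using a L(1) x by (auto simp: smult_l_minus minus_add minus_eq a_ac)
    moreover have "\<zero>\<^bsub>M\<^esub> \<ominus>\<^bsub>M\<^esub> y \<in> L" "\<zero>\<^bsub>M\<^esub> \<ominus>\<^bsub>M\<^esub> (a \<odot>\<^bsub>M\<^esub> x \<oplus>\<^bsub>M\<^esub> y) \<in> N"
      using a N(2,5) L(2,5) by auto
    ultimately show "\<ominus>\<^bsub>R\<^esub> a \<in> ?I"
      using a by (intro CollectI conjI bexI[of _ "\<zero>\<^bsub>M\<^esub> \<ominus>\<^bsub>M\<^esub> y"]) simp_all
  next
    fix a b assume "a \<in> ?I" "b \<in> ?I"
    then obtain y y' where a: "a \<in> carrier R" "y \<in> L" "a \<odot>\<^bsub>M\<^esub> x \<oplus>\<^bsub>M\<^esub> y \<in> N"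
      and b: "b \<in> carrier R" "y' \<in> L" "b \<odot>\<^bsub>M\<^esub> x \<oplus>\<^bsub>M\<^esub> y' \<in> N" by blast
    have "(a \<oplus>\<^bsub>R\<^esub> b) \<odot>\<^bsub>M\<^esub> x \<oplus>\<^bsub>M\<^esub> (y \<oplus>\<^bsub>M\<^esub> y') = (a \<odot>\<^bsub>M\<^esub> x \<oplus>\<^bsub>M\<^esub> y) \<oplus>\<^bsub>M\<^esub> (b \<odot>\<^bsub>M\<^esub> x \<oplus>\<^bsub>M\<^esub> y')"
      using a b L(1) x by (simp add: smult_l_distr a_ac subset_iff)
    then show "a \<oplus>\<^bsub>R\<^esub> b \<in> ?I"
      using a b N(3) L(3) by (intro CollectI conjI bexI[of _ "y \<oplus>\<^bsub>M\<^esub> y'"]) simp_all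
  qed auto
next
  fix a s assume "a \<in> {r \<in> carrier R. \<exists>y \<in> L. r \<odot>\<^bsub>M\<^esub> x \<oplus>\<^bsub>M\<^esub> y \<in> N}" and s: "s \<in> carrier R"
  then obtain y where a: "a \<in> carrier R" "y \<in> L" "a \<odot>\<^bsub>M\<^esub> x \<oplus>\<^bsub>M\<^esub> y \<in> N" by blast
  have "(s \<otimes>\<^bsub>R\<^esub> a) \<odot>\<^bsub>M\<^esub> x \<oplus>\<^bsub>M\<^esub> (s \<odot>\<^bsub>M\<^esub> y) = s \<odot>\<^bsub>M\<^esub> (a \<odot>\<^bsub>M\<^esub> x \<oplus>\<^bsub>M\<^esub> y)"
    using a x s submoduleD(1)[OF L] by (auto simp: smult_r_distr smult_assoc1)
  then show "s \<otimes>\<^bsub>R\<^esub> a \<in> {r \<in> carrier R. \<exists>y \<in> L. r \<odot>\<^bsub>M\<^esub> x \<oplus>\<^bsub>M\<^esub> y \<in> N}"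
    and "a \<otimes>\<^bsub>R\<^esub> s \<in> {r \<in> carrier R. \<exists>y \<in> L. r \<odot>\<^bsub>M\<^esub> x \<oplus>\<^bsub>M\<^esub> y \<in> N}"
    using a s submoduleD(4)[OF assms(2)] submoduleD(4)[OF assms(1)]
    by (auto intro!: bexI[of _ "s \<odot>\<^bsub>M\<^esub> y"] simp: m_comm)
qed

lemma submodule_Int: "submodule A R M \<Longrightarrow> submodule B R M \<Longrightarrow> submodule (A \<inter> B) R M"
  by (rule submoduleI_smult) (auto dest: submoduleD)

text \<open>Induction on the generators: the coefficients of the new generator in elements of the
  submodule form an ideal, finitely generated because \<open>R\<close> is noetherian.\<close>
lemma noetherian_submodule_finitely_spanned:
  assumes noeth: "noetherian_ring R" and "finite G" "G \<subseteq> carrier M"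
    and "submodule N R M" "N \<subseteq> mspan R M G"
  shows "\<exists>B. finite B \<and> B \<subseteq> N \<and> mspan R M B = N"
  using assms(2-5)
proof (induction G arbitrary: N rule: finite_induct)
  case empty
  then show ?case using span_least[of N "{}"] by blast
next
  case (insert x G)
  note N = insert.prems(2)
  have x: "x \<in> carrier M" and G: "G \<subseteq> carrier M" using insert.prems(1) by auto
  define SG where "SG = mspan R M G"
  have SG: "submodule SG R M" unfolding SG_def using span_submodule[OF G] .
  define I where "I = {r \<in> carrier R. \<exists>y \<in> SG. r \<odot>\<^bsub>M\<^esub> x \<oplus>\<^bsub>M\<^esub> y \<in> N}"
  have "ideal I R" unfolding I_def using coefficient_ideal[OF N SG x] .
  then obtain A where A: "A \<subseteq> carrier R" "finite A" "I = Idl\<^bsub>R\<^esub> A"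
    using noetherian_ring.finetely_gen[OF noeth] by blast
  have "\<forall>a \<in> A. \<exists>y. y \<in> SG \<and> a \<odot>\<^bsub>M\<^esub> x \<oplus>\<^bsub>M\<^esub> y \<in> N"
    using A R.genideal_self unfolding I_def by blast
  then obtain ya where ya: "\<And>a. a \<in> A \<Longrightarrow> ya a \<in> SG \<and> a \<odot>\<^bsub>M\<^esub> x \<oplus>\<^bsub>M\<^esub> ya a \<in> N"
    by metis
  obtain B0 where B0: "finite B0" "B0 \<subseteq> N \<inter> SG" "mspan R M B0 = N \<inter> SG"
    using insert.IH[OF G submodule_Int[OF N SG]] SG_def by blast
  define B where "B = B0 \<union> (\<lambda>a. a \<odot>\<^bsub>M\<^esub> x \<oplus>\<^bsub>M\<^esub> ya a) ` A"
  have BN: "B \<subseteq> N" unfolding B_def using B0 ya by auto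
  have spanB: "submodule (mspan R M B) R M"
    using span_submodule BN submoduleD(1)[OF N] by blast
  have "I \<subseteq> {r \<in> carrier R. \<exists>y \<in> SG. r \<odot>\<^bsub>M\<^esub> x \<oplus>\<^bsub>M\<^esub> y \<in> mspan R M B}"
    unfolding A(3) using A(1) ya
    by (intro R.genideal_minimal coefficient_ideal[OF spanB SG x])
      (auto simp: B_def intro: mspan.span_gen)
  have "N \<subseteq> mspan R M B"
  proof
    fix n assume n: "n \<in> N"
    then obtain r y where ry: "r \<in> carrier R" "y \<in> SG" "n = r \<odot>\<^bsub>M\<^esub> x \<oplus>\<^bsub>M\<^esub> y"
      using span_insert[OF G x] insert.prems(3) SG_def by blast
    then have "r \<in> I" unfolding I_def using n by auto
    then obtain y' where y': "y' \<in> SG" "r \<odot>\<^bsub>M\<^esub> x \<oplus>\<^bsub>M\<^esub> y' \<in> mspan R M B"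
      using \<open>I \<subseteq> _\<close> by blast
    define w where "w = r \<odot>\<^bsub>M\<^esub> x \<oplus>\<^bsub>M\<^esub> y'"
    have carr: "y \<in> carrier M" "y' \<in> carrier M" "w \<in> carrier M"
      using ry y' submoduleD(1)[OF SG] x unfolding w_def by auto
    have "n \<ominus>\<^bsub>M\<^esub> w = y \<ominus>\<^bsub>M\<^esub> y'"
      using carr x ry unfolding w_def by (simp add: minus_eq minus_add a_ac r_neg1 r_neg)
    moreover have "w \<in> N" using y'(2) span_least[OF N BN] unfolding w_def by blast
    ultimately have "n \<ominus>\<^bsub>M\<^esub> w \<in> mspan R M B0"
      using B0(3) submoduleD(5)[OF N n \<open>w \<in> N\<close>] submoduleD(5)[OF SG ry(2) y'(1)] by simp
    then have "(n \<ominus>\<^bsub>M\<^esub> w) \<oplus>\<^bsub>M\<^esub> w \<in> mspan R M B"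
      using span_mono[of B0 B] y'(2) unfolding B_def w_def by (blast intro: mspan.span_add)
    moreover have "(n \<ominus>\<^bsub>M\<^esub> w) \<oplus>\<^bsub>M\<^esub> w = n"
      using carr submoduleD(1)[OF N] n by (simp add: subset_iff minus_eq a_assoc l_neg)
    ultimately show "n \<in> mspan R M B" by simp
  qed
  moreover have "finite B" unfolding B_def using B0(1) A(2) by blast
  ultimately show ?case
    using BN span_least[OF N BN] by (intro exI[of _ B]) auto
qed

lemma linear_map_eq_on_span:
  assumes "module R N" "linear_map R M N f" "linear_map R M N g"
    and "S \<subseteq> carrier M" "\<And>s. s \<in> S \<Longrightarrow> f s = g s" "x \<in> mspan R M S"
  shows "f x = g x"
proof -
  interpret N: module R N by fact
  have "submodule {x \<in> carrier M. f x = g x} R M"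
    using assms(2,3) linear_map_zero[OF module_axioms assms(1) assms(2)]
      linear_map_zero[OF module_axioms assms(1) assms(3)]
    by (intro submoduleI_smult) (auto simp: linear_map_add linear_map_smult)
  then show ?thesis using span_least assms(4-6) by blast
qed

end

lemma linear_map_onto_if_spanning:
  assumes "module R M" "module R N" "linear_map R M N h"
    and "G \<subseteq> h ` carrier M" "mspan R N G = carrier N"
  shows "h ` carrier M = carrier N"
proof -
  interpret M: module R M by fact
  interpret N: module R N by fact
  have "submodule (h ` carrier M) R N"
    using linear_map_image_submodule[OF assms(1-3) M.carrier_is_submodule] .
  then show ?thesis
    using N.span_least[OF _ assms(4)] assms(5) linear_map_closed[OF assms(3)] by blast
qed

lemma finitely_generated_spanning_list:
  assumes "module R M" "finitely_generated R M"
  shows "\<exists>us. set us \<subseteq> carrier M \<and> mspan R M (set us) = carrier M"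
proof -
  interpret module R M by fact
  obtain S where S: "finite S" "S \<subseteq> carrier M"
    "\<And>x. x \<in> carrier M \<Longrightarrow> \<exists>c. c \<in> S \<rightarrow> carrier R \<and> x = finsum M (\<lambda>s. c s \<odot>\<^bsub>M\<^esub> s) S"
    using assms(2) unfolding finitely_generated_def by blast
  have "carrier M \<subseteq> mspan R M S"
  proof
    fix x assume "x \<in> carrier M"
    then obtain c where "c \<in> S \<rightarrow> carrier R" "x = finsum M (\<lambda>s. c s \<odot>\<^bsub>M\<^esub> s) S" using S(3) by blast
    moreover have "(\<lambda>s. c s \<odot>\<^bsub>M\<^esub> s) \<in> S \<rightarrow> mspan R M S"
      using \<open>c \<in> S \<rightarrow> carrier R\<close> by (auto intro: mspan.intros)
    ultimately show "x \<in> mspan R M S"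
      using finsum_in_span[OF S(2,1)] by simp
  qed
  moreover obtain us where "set us = S" using finite_list[OF S(1)] by blast
  ultimately show ?thesis
    using span_closed[OF S(2)] S(2) by (intro exI[of _ us] conjI equalityI) simp_all
qed

definition noetherian_module :: "('r, 'x) ring_scheme \<Rightarrow> ('r, 'v, 'z) module_scheme \<Rightarrow> bool" where
  "noetherian_module R M \<longleftrightarrow>
     (\<forall>P. submodule P R M \<longrightarrow> (\<exists>B. finite B \<and> B \<subseteq> P \<and> mspan R M B = P))"

lemma noetherian_module_if_finitely_generated:
  assumes "noetherian_ring R" "module R M" "finitely_generated R M"
  shows "noetherian_module R M"
  unfolding noetherian_module_def
proof (intro allI impI)
  interpret module R M by fact
  fix P assume P: "submodule P R M"
  obtain us where us: "set us \<subseteq> carrier M" "mspan R M (set us) = carrier M"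
    using finitely_generated_spanning_list[OF assms(2,3)] by blast
  show "\<exists>B. finite B \<and> B \<subseteq> P \<and> mspan R M B = P"
    using noetherian_submodule_finitely_spanned[OF assms(1) finite_set us(1) P] submoduleD(1)[OF P] us(2)
    by simp
qed

lemma noetherian_module_embedding:
  assumes M: "module R M" and N: "module R N" and h: "linear_map R M N h"
    and inj: "inj_on h (carrier M)" and noeth: "noetherian_module R N"
  shows "noetherian_module R M"
  unfolding noetherian_module_def
proof (intro allI impI)
  interpret M: module R M by fact
  interpret N: module R N by fact
  fix P assume P: "submodule P R M"
  have "submodule (h ` P) R N" by (rule linear_map_image_submodule[OF M N h P])
  then obtain B' where B': "finite B'" "B' \<subseteq> h ` P" "mspan R N B' = h ` P"
    using noeth[unfolded noetherian_module_def, rule_format] by meson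
  obtain B where B: "B \<subseteq> P" "finite B" "B' = h ` B"
    using finite_subset_image[OF B'(1,2)] by blast
  have PM: "P \<subseteq> carrier M" using M.submoduleD(1)[OF P] .
  have BM: "B \<subseteq> carrier M" using B(1) PM by blast
  have "mspan R N (h ` B) \<subseteq> h ` mspan R M B"
  proof (rule N.span_least)
    show "submodule (h ` mspan R M B) R N"
      by (rule linear_map_image_submodule[OF M N h M.span_submodule[OF BM]])
    show "h ` B \<subseteq> h ` mspan R M B" by (intro image_mono subsetI mspan.span_gen)
  qed
  have "P \<subseteq> mspan R M B"
  proof
    fix p assume p: "p \<in> P"
    obtain p' where "p' \<in> mspan R M B" "h p = h p'" using p B'(3) B(3) \<open>mspan R N (h ` B) \<subseteq> _\<close> by blast
    moreover have "mspan R M B \<subseteq> carrier M" using M.span_closed[OF BM] .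
    ultimately show "p \<in> mspan R M B" using inj p PM unfolding inj_on_def by auto
  qed
  then show "\<exists>B. finite B \<and> B \<subseteq> P \<and> mspan R M B = P"
    using B(1,2) M.span_least[OF P B(1)] by (intro exI[of _ B]) simp
qed

section \<open>Faithful exact functors on abelian categories\<close>

locale abelian_fiber_functor =
  fixes R :: "('r, 'x) ring_scheme" and C :: "('o, 'm, 'r) lincat"
    and TO :: "'o \<Rightarrow> ('r, 'v) module" and TM :: "'m \<Rightarrow> 'v \<Rightarrow> 'v"
  assumes cring: "cring R"
    and abelian: "is_abelian_R_linear_category R C"
    and fiber_functor: "is_fiber_functor R C TO TM"
begin

lemma R_linear_category: "is_R_linear_category R C"
  using abelian unfolding is_abelian_R_linear_category_def by blast

lemma
  shows hom_objs: "f \<in> Hom C X Y \<Longrightarrow> X \<in> Obj C \<and> Y \<in> Obj C"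
    and ident_hom: "X \<in> Obj C \<Longrightarrow> ident C X \<in> Hom C X X"
    and comp_hom: "f \<in> Hom C X Y \<Longrightarrow> g \<in> Hom C Y Z \<Longrightarrow> comp C g f \<in> Hom C X Z"
    and comp_assoc: "f \<in> Hom C X Y \<Longrightarrow> g \<in> Hom C Y Z \<Longrightarrow> h \<in> Hom C Z W \<Longrightarrow>
      comp C h (comp C g f) = comp C (comp C h g) f"
    and comp_ident_right: "f \<in> Hom C X Y \<Longrightarrow> comp C f (ident C X) = f"
  using R_linear_category unfolding is_R_linear_category_def is_category_def by meson+

lemma hom_module: "X \<in> Obj C \<Longrightarrow> Y \<in> Obj C \<Longrightarrow> module R (hom_module C X Y)"
  using R_linear_category unfolding is_R_linear_category_def by blast

lemma hom_module_simps [simp]: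
  "carrier (hom_module C X Y) = Hom C X Y" "zero (hom_module C X Y) = hzero C X Y"
  "add (hom_module C X Y) = hadd C" "smult (hom_module C X Y) = hsmult C"
  unfolding hom_module_def by simp_all

lemma
  shows hzero_hom: "X \<in> Obj C \<Longrightarrow> Y \<in> Obj C \<Longrightarrow> hzero C X Y \<in> Hom C X Y"
    and hadd_hom: "f \<in> Hom C X Y \<Longrightarrow> g \<in> Hom C X Y \<Longrightarrow> hadd C f g \<in> Hom C X Y"
    and hsmult_hom: "r \<in> carrier R \<Longrightarrow> f \<in> Hom C X Y \<Longrightarrow> hsmult C r f \<in> Hom C X Y"
proof -
  show "hzero C X Y \<in> Hom C X Y" if "X \<in> Obj C" "Y \<in> Obj C"
  proof -
    interpret module R "hom_module C X Y" using hom_module that .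
    show ?thesis using zero_closed by simp
  qed
  show "hadd C f g \<in> Hom C X Y" if "f \<in> Hom C X Y" "g \<in> Hom C X Y"
  proof -
    interpret module R "hom_module C X Y" using hom_module hom_objs that by blast
    show ?thesis using a_closed that by simp
  qed
  show "hsmult C r f \<in> Hom C X Y" if "r \<in> carrier R" "f \<in> Hom C X Y"
  proof -
    interpret module R "hom_module C X Y" using hom_module hom_objs that by blast
    show ?thesis using smult_closed that by simp
  qed
qed

lemma
  shows T_module: "X \<in> Obj C \<Longrightarrow> module R (TO X)"
    and T_finitely_generated: "X \<in> Obj C \<Longrightarrow> finitely_generated R (TO X)"
    and T_linear: "f \<in> Hom C X Y \<Longrightarrow> linear_map R (TO X) (TO Y) (TM f)"
    and T_ident: "X \<in> Obj C \<Longrightarrow> v \<in> carrier (TO X) \<Longrightarrow> TM (ident C X) v = v"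
    and T_comp: "f \<in> Hom C X Y \<Longrightarrow> g \<in> Hom C Y Z \<Longrightarrow> v \<in> carrier (TO X) \<Longrightarrow>
      TM (comp C g f) v = TM g (TM f v)"
    and T_hadd: "f \<in> Hom C X Y \<Longrightarrow> g \<in> Hom C X Y \<Longrightarrow> v \<in> carrier (TO X) \<Longrightarrow>
      TM (hadd C f g) v = TM f v \<oplus>\<^bsub>TO Y\<^esub> TM g v"
    and T_hsmult: "f \<in> Hom C X Y \<Longrightarrow> r \<in> carrier R \<Longrightarrow> v \<in> carrier (TO X) \<Longrightarrow>
      TM (hsmult C r f) v = r \<odot>\<^bsub>TO Y\<^esub> TM f v"
    and faithful: "f \<in> Hom C X Y \<Longrightarrow> g \<in> Hom C X Y \<Longrightarrow>
      (\<And>v. v \<in> carrier (TO X) \<Longrightarrow> TM f v = TM g v) \<Longrightarrow> f = g"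
    and exact: "f \<in> Hom C X Y \<Longrightarrow> g \<in> Hom C Y Z \<Longrightarrow> is_kernel C Y Z g X f \<Longrightarrow>
      is_cokernel C X Y f Z g \<Longrightarrow> inj_on (TM f) (carrier (TO X)) \<and>
      {y \<in> carrier (TO Y). TM g y = \<zero>\<^bsub>TO Z\<^esub>} = TM f ` carrier (TO X)"
  using fiber_functor unfolding is_fiber_functor_def lin_map_eq_linear_map by meson+

lemma
  assumes "f \<in> Hom C X Y"
  shows T_closed: "v \<in> carrier (TO X) \<Longrightarrow> TM f v \<in> carrier (TO Y)"
    and T_add: "v \<in> carrier (TO X) \<Longrightarrow> w \<in> carrier (TO X) \<Longrightarrow>
      TM f (v \<oplus>\<^bsub>TO X\<^esub> w) = TM f v \<oplus>\<^bsub>TO Y\<^esub> TM f w"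
    and T_smult: "r \<in> carrier R \<Longrightarrow> v \<in> carrier (TO X) \<Longrightarrow>
      TM f (r \<odot>\<^bsub>TO X\<^esub> v) = r \<odot>\<^bsub>TO Y\<^esub> TM f v"
  using linear_map_closed[OF T_linear[OF assms]] linear_map_add[OF T_linear[OF assms]]
    linear_map_smult[OF T_linear[OF assms]] by blast+

lemma T_zero: "f \<in> Hom C X Y \<Longrightarrow> TM f \<zero>\<^bsub>TO X\<^esub> = \<zero>\<^bsub>TO Y\<^esub>"
  using linear_map_zero[OF T_module T_module T_linear] hom_objs by blast

lemma T_hzero:
  assumes "X \<in> Obj C" "Y \<in> Obj C" "v \<in> carrier (TO X)"
  shows "TM (hzero C X Y) v = \<zero>\<^bsub>TO Y\<^esub>"
proof -
  interpret H: module R "hom_module C X Y" using hom_module assms by blast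
  interpret TY: module R "TO Y" using T_module assms by blast
  have z: "hzero C X Y \<in> Hom C X Y" using hzero_hom assms by blast
  have "TM (hzero C X Y) v = TM (hsmult C \<zero>\<^bsub>R\<^esub> (hzero C X Y)) v"
    using H.smult_l_null[of "hzero C X Y"] z by simp
  also have "\<dots> = \<zero>\<^bsub>TO Y\<^esub>" using T_hsmult[OF z _ assms(3)] T_closed[OF z assms(3)] by simp
  finally show ?thesis .
qed

lemma hom_eq_hzeroI:
  assumes "f \<in> Hom C X Y" "\<And>v. v \<in> carrier (TO X) \<Longrightarrow> TM f v = \<zero>\<^bsub>TO Y\<^esub>"
  shows "f = hzero C X Y"
  using assms hom_objs[OF assms(1)] by (intro faithful[OF assms(1) hzero_hom]) (simp_all add: T_hzero)

lemma comp_hzero_right: "g \<in> Hom C Y Z \<Longrightarrow> X \<in> Obj C \<Longrightarrow> comp C g (hzero C X Y) = hzero C X Z"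
  using hom_objs[of g Y Z] hzero_hom[of X Y]
  by (intro hom_eq_hzeroI comp_hom) (simp_all add: T_comp T_hzero T_zero)

lemma comp_hzero_left: "f \<in> Hom C X Y \<Longrightarrow> Z \<in> Obj C \<Longrightarrow> comp C (hzero C Y Z) f = hzero C X Z"
  using hom_objs[of f X Y] hzero_hom[of Y Z]
  by (intro hom_eq_hzeroI comp_hom) (simp_all add: T_comp T_hzero T_closed)

definition hdiff :: "'m \<Rightarrow> 'm \<Rightarrow> 'm" where
  "hdiff f g = hadd C f (hsmult C (\<ominus>\<^bsub>R\<^esub> \<one>\<^bsub>R\<^esub>) g)"

lemma hdiff_hom: "f \<in> Hom C X Y \<Longrightarrow> g \<in> Hom C X Y \<Longrightarrow> hdiff f g \<in> Hom C X Y"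
  unfolding hdiff_def using cring.axioms(1)[OF cring] by (simp add: hadd_hom hsmult_hom ring.ring_simprules)

lemma T_hdiff_eq_zero_iff:
  assumes "f \<in> Hom C X Y" "g \<in> Hom C X Y" "v \<in> carrier (TO X)"
  shows "TM (hdiff f g) v = \<zero>\<^bsub>TO Y\<^esub> \<longleftrightarrow> TM f v = TM g v"
proof -
  interpret TY: module R "TO Y" using T_module hom_objs assms by blast
  have "TM (hdiff f g) v = TM f v \<ominus>\<^bsub>TO Y\<^esub> TM g v"
    unfolding hdiff_def using assms T_closed[OF assms(2,3)]
    by (simp add: T_hadd hsmult_hom T_hsmult TY.smult_l_minus a_minus_def)
  then show ?thesis
    using T_closed[OF assms(1,3)] T_closed[OF assms(2,3)] TY.r_neg TY.add.inv_equality
    by (metis TY.add.inv_closed TY.minus_eq TY.minus_minus)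
qed

lemma T_eval_linear:
  "v \<in> carrier (TO X) \<Longrightarrow> linear_map R (hom_module C X Y) (TO Y) (\<lambda>h. TM h v)"
  by (intro linear_mapI) (simp_all add: T_closed T_hadd T_hsmult)

lemma T_eval_kernel_submodule:
  assumes "X \<in> Obj C" "Y \<in> Obj C" "v \<in> carrier (TO X)"
  shows "submodule {h \<in> Hom C X Y. TM h v = \<zero>\<^bsub>TO Y\<^esub>} R (hom_module C X Y)"
  using linear_map_kernel_submodule[OF hom_module T_module T_eval_linear] assms by simp

lemma T_finsum_hom:
  assumes "X \<in> Obj C" "Y \<in> Obj C" "finite A" "h \<in> A \<rightarrow> Hom C X Y" "v \<in> carrier (TO X)"
  shows "TM (finsum (hom_module C X Y) h A) v = finsum (TO Y) (\<lambda>j. TM (h j) v) A"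
  using linear_map_finsum[OF hom_module T_module T_eval_linear] assms by simp

lemma
  shows zero_object: "\<exists>Z \<in> Obj C. \<forall>X \<in> Obj C. (\<exists>!u. u \<in> Hom C X Z) \<and> (\<exists>!u. u \<in> Hom C Z X)"
    and binary_biproduct: "X \<in> Obj C \<Longrightarrow> Y \<in> Obj C \<Longrightarrow> \<exists>P i1 i2 p1 p2. P \<in> Obj C \<and>
        i1 \<in> Hom C X P \<and> i2 \<in> Hom C Y P \<and> p1 \<in> Hom C P X \<and> p2 \<in> Hom C P Y \<and>
        comp C p1 i1 = ident C X \<and> comp C p2 i2 = ident C Y \<and>
        comp C p1 i2 = hzero C Y X \<and> comp C p2 i1 = hzero C X Y \<and>
        hadd C (comp C i1 p1) (comp C i2 p2) = ident C P"
    and kernel_exists: "f \<in> Hom C X Y \<Longrightarrow> \<exists>K k. is_kernel C X Y f K k"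
    and cokernel_exists: "f \<in> Hom C X Y \<Longrightarrow> \<exists>Q q. is_cokernel C X Y f Q q"
    and mono_is_kernel: "is_mono C X Y m \<Longrightarrow> \<exists>Z g. g \<in> Hom C Y Z \<and> is_kernel C Y Z g X m"
    and epi_is_cokernel: "is_epi C X Y e \<Longrightarrow> \<exists>Z g. g \<in> Hom C Z X \<and> is_cokernel C Z X g Y e"
  using abelian unfolding is_abelian_R_linear_category_def by meson+

lemma is_kernelD:
  "is_kernel C X Y f K k \<Longrightarrow> K \<in> Obj C \<and> k \<in> Hom C K X \<and> comp C f k = hzero C K Y"
  unfolding is_kernel_def by blast

lemma is_cokernelD:
  "is_cokernel C X Y f Q q \<Longrightarrow> Q \<in> Obj C \<and> q \<in> Hom C Y Q \<and> comp C q f = hzero C X Q"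
  unfolding is_cokernel_def by blast

lemma kernel_universal:
  "is_kernel C X Y f K k \<Longrightarrow> W \<in> Obj C \<Longrightarrow> h \<in> Hom C W X \<Longrightarrow> comp C f h = hzero C W Y \<Longrightarrow>
    \<exists>!u. u \<in> Hom C W K \<and> comp C k u = h"
  unfolding is_kernel_def by simp

lemma cokernel_universal:
  "is_cokernel C X Y f Q q \<Longrightarrow> W \<in> Obj C \<Longrightarrow> h \<in> Hom C Y W \<Longrightarrow> comp C h f = hzero C X W \<Longrightarrow>
    \<exists>!u. u \<in> Hom C Q W \<and> comp C u q = h"
  unfolding is_cokernel_def by simp

lemma kernel_lift:
  assumes "is_kernel C X Y f K k" "h \<in> Hom C W X" "comp C f h = hzero C W Y"
  obtains u where "u \<in> Hom C W K" "comp C k u = h"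
  using kernel_universal[OF assms(1) _ assms(2,3)] hom_objs[OF assms(2)] by blast

lemma cokernel_desc:
  assumes "is_cokernel C X Y f Q q" "h \<in> Hom C Y W" "comp C h f = hzero C X W"
  obtains u where "u \<in> Hom C Q W" "comp C u q = h"
  using cokernel_universal[OF assms(1) _ assms(2,3)] hom_objs[OF assms(2)] by blast

lemma mono_cancel:
  "is_mono C X Y m \<Longrightarrow> a \<in> Hom C W X \<Longrightarrow> b \<in> Hom C W X \<Longrightarrow> comp C m a = comp C m b \<Longrightarrow> a = b"
  using hom_objs unfolding is_mono_def by blast

lemma kernel_is_mono:
  assumes k: "is_kernel C X Y f K k" and f: "f \<in> Hom C X Y"
  shows "is_mono C K X k"
  unfolding is_mono_def
proof (intro conjI ballI impI)
  have k_hom: "k \<in> Hom C K X" and fk: "comp C f k = hzero C K Y" using is_kernelD[OF k] by auto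
  show "k \<in> Hom C K X" by (fact k_hom)
  fix W a b assume W: "W \<in> Obj C" and ab: "a \<in> Hom C W K" "b \<in> Hom C W K"
    and e: "comp C k a = comp C k b"
  have "comp C f (comp C k a) = hzero C W Y"
    using fk comp_assoc[OF ab(1) k_hom f] comp_hzero_left[OF ab(1)] hom_objs[OF f] by simp
  from kernel_universal[OF k W comp_hom[OF ab(1) k_hom] this]
  show "a = b" using ab e by (auto dest: ex1_implies_ex)
qed

text \<open>The factorisation \<open>f = i \<circ> f1\<close> of \<open>f\<close> through its image \<open>i = ker (coker f)\<close>.\<close>
lemma image_cokernel:
  assumes c: "is_cokernel C Q Q' f D c" and i: "is_kernel C Q' D c I i"
    and f1: "f1 \<in> Hom C Q I" "comp C i f1 = f"
  shows "is_cokernel C I Q' i D c"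
  unfolding is_cokernel_def
proof (intro conjI ballI impI)
  show "D \<in> Obj C" "c \<in> Hom C Q' D" "comp C c i = hzero C I D"
    using is_cokernelD[OF c] is_kernelD[OF i] by auto
  fix W h assume W: "W \<in> Obj C" and h: "h \<in> Hom C Q' W" and hi: "comp C h i = hzero C I W"
  have i_hom: "i \<in> Hom C I Q'" using is_kernelD[OF i] by blast
  have "comp C h f = comp C (comp C h i) f1"
    using f1(2) comp_assoc[OF f1(1) i_hom h] by simp
  then have "comp C h f = hzero C Q W"
    using hi comp_hzero_left[OF f1(1) W] by simp
  then show "\<exists>!u. u \<in> Hom C D W \<and> comp C u c = h"
    by (rule cokernel_universal[OF c W h])
qed

text \<open>If \<open>d \<circ> f1 = 0\<close>, the monomorphism \<open>I \<supseteq> ker d \<hookrightarrow> Q'\<close> is the kernel of some \<open>h\<close>; then \<open>h\<close> kills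
  \<open>f\<close>, hence \<open>i\<close>, so \<open>i\<close> factors through \<open>ker d\<close> and \<open>ker d\<close> is all of \<open>I\<close>.\<close>
lemma coimage_zero_test:
  assumes c: "is_cokernel C Q Q' f D c" and i: "is_kernel C Q' D c I i"
    and f1: "f1 \<in> Hom C Q I" "comp C i f1 = f"
    and d: "d \<in> Hom C I W" "comp C d f1 = hzero C Q W"
  shows "d = hzero C I W"
proof -
  have c_hom: "c \<in> Hom C Q' D" and i_hom: "i \<in> Hom C I Q'" and ci: "comp C c i = hzero C I D"
    using is_cokernelD[OF c] is_kernelD[OF i] by auto
  have W: "W \<in> Obj C" using hom_objs d(1) by blast
  have i_mono: "is_mono C I Q' i" using kernel_is_mono[OF i c_hom] .
  obtain M m where m: "is_kernel C I W d M m" using kernel_exists[OF d(1)] by blast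
  have m_hom: "m \<in> Hom C M I" and dm: "comp C d m = hzero C M W" using is_kernelD[OF m] by auto
  obtain g0 where g0: "g0 \<in> Hom C Q M" "comp C m g0 = f1" using kernel_lift[OF m f1(1) d(2)] .
  have im: "comp C i m \<in> Hom C M Q'" using comp_hom[OF m_hom i_hom] .
  have "is_mono C M Q' (comp C i m)"
    unfolding is_mono_def
  proof (intro conjI ballI impI im)
    fix W' a b assume a: "a \<in> Hom C W' M" and b: "b \<in> Hom C W' M"
      and e: "comp C (comp C i m) a = comp C (comp C i m) b"
    then have "comp C i (comp C m a) = comp C i (comp C m b)"
      using comp_assoc[OF a m_hom i_hom] comp_assoc[OF b m_hom i_hom] by simp
    then have "comp C m a = comp C m b"
      using mono_cancel[OF i_mono comp_hom[OF a m_hom] comp_hom[OF b m_hom]] by blast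
    then show "a = b" using mono_cancel[OF kernel_is_mono[OF m d(1)] a b] by blast
  qed
  then obtain Z h where h: "h \<in> Hom C Q' Z" "is_kernel C Q' Z h M (comp C i m)"
    using mono_is_kernel by blast
  have Z: "Z \<in> Obj C" using hom_objs h(1) by blast
  have "comp C h f = comp C (comp C h (comp C i m)) g0"
    using f1(2) g0(2) comp_assoc[OF g0(1) m_hom i_hom] comp_assoc[OF g0(1) im h(1)] by simp
  then have "comp C h f = hzero C Q Z"
    using is_kernelD[OF h(2)] comp_hzero_left[OF g0(1) Z] by simp
  then obtain h' where h': "h' \<in> Hom C D Z" "comp C h' c = h" by (rule cokernel_desc[OF c h(1)])
  have "comp C h i = hzero C I Z"
    using h'(2) comp_assoc[OF i_hom c_hom h'(1)] ci comp_hzero_right[OF h'(1)] hom_objs[OF i_hom]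
    by simp
  then obtain t where t: "t \<in> Hom C I M" "comp C (comp C i m) t = i"
    using kernel_lift[OF h(2) i_hom] by blast
  have "comp C i (comp C m t) = comp C i (ident C I)"
    using t(2) comp_assoc[OF t(1) m_hom i_hom] comp_ident_right[OF i_hom] by simp
  then have mt: "comp C m t = ident C I"
    using mono_cancel[OF i_mono comp_hom[OF t(1) m_hom] ident_hom] hom_objs[OF i_hom] by blast
  have "d = comp C (comp C d m) t"
    using comp_assoc[OF t(1) m_hom d(1)] mt comp_ident_right[OF d(1)] by simp
  then show ?thesis using dm comp_hzero_left[OF t(1) W] by simp
qed

lemma epi_if_zero_test:
  assumes e: "e \<in> Hom C Q I"
    and zero_test: "\<And>W d. d \<in> Hom C I W \<Longrightarrow> comp C d e = hzero C Q W \<Longrightarrow> d = hzero C I W"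
  shows "is_epi C Q I e"
  unfolding is_epi_def
proof (intro conjI ballI impI e)
  fix W g h assume W: "W \<in> Obj C" and g: "g \<in> Hom C I W" and h: "h \<in> Hom C I W"
    and gh: "comp C g e = comp C h e"
  have Q: "Q \<in> Obj C" using hom_objs e by blast
  have "comp C (hdiff g h) e = hzero C Q W"
  proof (rule hom_eq_hzeroI[OF comp_hom[OF e hdiff_hom[OF g h]]])
    fix v assume v: "v \<in> carrier (TO Q)"
    have "TM g (TM e v) = TM h (TM e v)" using gh T_comp[OF e g v] T_comp[OF e h v] by metis
    then show "TM (comp C (hdiff g h) e) v = \<zero>\<^bsub>TO W\<^esub>"
      using T_comp[OF e hdiff_hom[OF g h] v] T_hdiff_eq_zero_iff[OF g h T_closed[OF e v]] by simp
  qed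
  then have "hdiff g h = hzero C I W" using zero_test hdiff_hom[OF g h] by blast
  then show "g = h"
    using faithful[OF g h] T_hdiff_eq_zero_iff[OF g h] T_hzero hom_objs[OF g] by metis
qed

lemma epi_cokernel_of_kernel:
  assumes e: "is_epi C Q I e" and s: "is_kernel C Q I e S \<sigma>"
  shows "is_cokernel C S Q \<sigma> I e"
  unfolding is_cokernel_def
proof (intro conjI ballI impI)
  have e_hom: "e \<in> Hom C Q I" using e unfolding is_epi_def by blast
  have \<sigma>_hom: "\<sigma> \<in> Hom C S Q" and e\<sigma>: "comp C e \<sigma> = hzero C S I" using is_kernelD[OF s] by auto
  show "I \<in> Obj C" "e \<in> Hom C Q I" "comp C e \<sigma> = hzero C S I"
    using e_hom e\<sigma> hom_objs by blast+
  obtain G g where g: "g \<in> Hom C G Q" "is_cokernel C G Q g I e" using epi_is_cokernel[OF e] by blast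
  obtain v where v: "v \<in> Hom C G S" "comp C \<sigma> v = g"
    using kernel_lift[OF s g(1)] is_cokernelD[OF g(2)] by blast
  fix W h assume W: "W \<in> Obj C" and h: "h \<in> Hom C Q W" and hs: "comp C h \<sigma> = hzero C S W"
  have "comp C h g = hzero C G W"
    using v(2) comp_assoc[OF v(1) \<sigma>_hom h] hs comp_hzero_left[OF v(1) W] by simp
  then show "\<exists>!u. u \<in> Hom C I W \<and> comp C u e = h"
    by (rule cokernel_universal[OF g(2) W h])
qed

lemma kernel_cover_exists:
  assumes f: "f \<in> Hom C Q Q'"
  shows "\<exists>S \<sigma>. \<sigma> \<in> Hom C S Q \<and>
    TM \<sigma> ` carrier (TO S) = {y \<in> carrier (TO Q). TM f y = \<zero>\<^bsub>TO Q'\<^esub>}"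
proof -
  obtain D c where c: "is_cokernel C Q Q' f D c" using cokernel_exists[OF f] by blast
  have c_hom: "c \<in> Hom C Q' D" and cf: "comp C c f = hzero C Q D" using is_cokernelD[OF c] by auto
  obtain I i where i: "is_kernel C Q' D c I i" using kernel_exists[OF c_hom] by blast
  have i_hom: "i \<in> Hom C I Q'" using is_kernelD[OF i] by blast
  obtain f1 where f1: "f1 \<in> Hom C Q I" "comp C i f1 = f" using kernel_lift[OF i f cf] .
  have inj: "inj_on (TM i) (carrier (TO I))"
    using exact[OF i_hom c_hom i image_cokernel[OF c i f1]] by blast
  have epi: "is_epi C Q I f1"
    using epi_if_zero_test[OF f1(1) coimage_zero_test[OF c i f1]] .
  obtain S \<sigma> where s: "is_kernel C Q I f1 S \<sigma>" using kernel_exists[OF f1(1)] by blast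
  have \<sigma>_hom: "\<sigma> \<in> Hom C S Q" using is_kernelD[OF s] by blast
  have "TM \<sigma> ` carrier (TO S) = {y \<in> carrier (TO Q). TM f1 y = \<zero>\<^bsub>TO I\<^esub>}"
    using exact[OF \<sigma>_hom f1(1) s epi_cokernel_of_kernel[OF epi s]] by blast
  moreover have "TM f y = \<zero>\<^bsub>TO Q'\<^esub> \<longleftrightarrow> TM f1 y = \<zero>\<^bsub>TO I\<^esub>" if y: "y \<in> carrier (TO Q)" for y
  proof -
    interpret TI: module R "TO I" using T_module hom_objs[OF i_hom] by blast
    have "TM f y = TM i (TM f1 y)" using T_comp[OF f1(1) i_hom y] f1(2) by simp
    then show ?thesis
      using inj T_closed[OF f1(1) y] T_zero[OF i_hom] TI.zero_closed unfolding inj_on_def by metis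
  qed
  ultimately show ?thesis using \<sigma>_hom by (intro exI conjI) auto
qed

lemma common_kernel_cover_exists:
  assumes "finite H" "H \<subseteq> Hom C Q W" "Q \<in> Obj C"
  shows "\<exists>P \<sigma>. \<sigma> \<in> Hom C P Q \<and>
    TM \<sigma> ` carrier (TO P) = {y \<in> carrier (TO Q). \<forall>h \<in> H. TM h y = \<zero>\<^bsub>TO W\<^esub>}"
  using assms(1,2)
proof (induction H rule: finite_induct)
  case empty
  have "TM (ident C Q) ` carrier (TO Q) = carrier (TO Q)"
    using T_ident[OF assms(3)] by (simp cong: image_cong)
  then show ?case using ident_hom[OF assms(3)] by auto
next
  case (insert h H)
  then obtain P \<sigma> where \<sigma>: "\<sigma> \<in> Hom C P Q"
    "TM \<sigma> ` carrier (TO P) = {y \<in> carrier (TO Q). \<forall>h \<in> H. TM h y = \<zero>\<^bsub>TO W\<^esub>}"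
    by auto
  have h: "h \<in> Hom C Q W" using insert.prems by simp
  obtain S \<tau> where \<tau>: "\<tau> \<in> Hom C S P"
    "TM \<tau> ` carrier (TO S) = {p \<in> carrier (TO P). TM (comp C h \<sigma>) p = \<zero>\<^bsub>TO W\<^esub>}"
    using kernel_cover_exists[OF comp_hom[OF \<sigma>(1) h]] by blast
  have "TM (comp C \<sigma> \<tau>) ` carrier (TO S) = TM \<sigma> ` TM \<tau> ` carrier (TO S)"
    using T_comp[OF \<tau>(1) \<sigma>(1)] by (simp add: image_image cong: image_cong)
  also have "\<dots> = {y \<in> TM \<sigma> ` carrier (TO P). TM h y = \<zero>\<^bsub>TO W\<^esub>}"
    using \<tau>(2) T_comp[OF \<sigma>(1) h] by auto
  also have "\<dots> = {y \<in> carrier (TO Q). \<forall>h' \<in> insert h H. TM h' y = \<zero>\<^bsub>TO W\<^esub>}"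
    using \<sigma>(2) by auto
  finally show ?case using comp_hom[OF \<tau>(1) \<sigma>(1)] by blast
qed

lemma lift_through_surjection:
  assumes \<alpha>: "\<alpha> \<in> Hom C S W" and \<beta>: "\<beta> \<in> Hom C S V"
    and onto: "TM \<alpha> ` carrier (TO S) = carrier (TO W)"
    and \<phi>: "linear_map R (TO W) (TO V) \<phi>"
    and \<beta>\<alpha>: "\<And>s. s \<in> carrier (TO S) \<Longrightarrow> TM \<beta> s = \<phi> (TM \<alpha> s)"
  shows "\<exists>u \<in> Hom C W V. \<forall>y \<in> carrier (TO W). TM u y = \<phi> y"
proof -
  have W: "W \<in> Obj C" and V: "V \<in> Obj C" using hom_objs \<alpha> \<beta> by blast+
  have epi: "is_epi C S W \<alpha>"
    unfolding is_epi_def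
  proof (intro conjI ballI impI \<alpha>)
    fix Z g h assume g: "g \<in> Hom C W Z" and h: "h \<in> Hom C W Z" and gh: "comp C g \<alpha> = comp C h \<alpha>"
    show "g = h"
    proof (rule faithful[OF g h])
      fix y assume "y \<in> carrier (TO W)"
      then obtain s where s: "s \<in> carrier (TO S)" "y = TM \<alpha> s" unfolding onto[symmetric] by blast
      then show "TM g y = TM h y" using gh T_comp[OF \<alpha> g s(1)] T_comp[OF \<alpha> h s(1)] by simp
    qed
  qed
  obtain G \<gamma> where \<gamma>: "\<gamma> \<in> Hom C G S" "is_cokernel C G S \<gamma> W \<alpha>"
    using epi_is_cokernel[OF epi] by blast
  have \<alpha>\<gamma>: "comp C \<alpha> \<gamma> = hzero C G W" using is_cokernelD[OF \<gamma>(2)] by blast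
  have G: "G \<in> Obj C" using hom_objs[OF \<gamma>(1)] by blast
  have "comp C \<beta> \<gamma> = hzero C G V"
  proof (rule hom_eq_hzeroI[OF comp_hom[OF \<gamma>(1) \<beta>]])
    fix x assume x: "x \<in> carrier (TO G)"
    have "TM (comp C \<beta> \<gamma>) x = \<phi> (TM (comp C \<alpha> \<gamma>) x)"
      using T_comp[OF \<gamma>(1) \<beta> x] T_comp[OF \<gamma>(1) \<alpha> x] \<beta>\<alpha>[OF T_closed[OF \<gamma>(1) x]] by simp
    also have "\<dots> = \<zero>\<^bsub>TO V\<^esub>"
      using \<alpha>\<gamma> T_hzero[OF G W x] linear_map_zero[OF T_module[OF W] T_module[OF V] \<phi>] by simp
    finally show "TM (comp C \<beta> \<gamma>) x = \<zero>\<^bsub>TO V\<^esub>" .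
  qed
  then obtain u where u: "u \<in> Hom C W V" "comp C u \<alpha> = \<beta>"
    by (rule cokernel_desc[OF \<gamma>(2) \<beta>])
  have "TM u y = \<phi> y" if y: "y \<in> carrier (TO W)" for y
  proof -
    obtain s where s: "s \<in> carrier (TO S)" "y = TM \<alpha> s" using y[folded onto] by blast
    have "TM u y = TM (comp C u \<alpha>) s" using T_comp[OF \<alpha> u(1) s(1)] s(2) by simp
    also have "\<dots> = \<phi> y" using u(2) \<beta>\<alpha>[OF s(1)] s(2) by simp
    finally show ?thesis .
  qed
  then show ?thesis using u(1) by blast
qed

subsection \<open>Biproducts\<close>

lemma binary_biproduct_T:
  assumes "Q \<in> Obj C" "X \<in> Obj C"
  obtains P i1 i2 p1 p2 where "P \<in> Obj C"
    "i1 \<in> Hom C Q P" "i2 \<in> Hom C X P" "p1 \<in> Hom C P Q" "p2 \<in> Hom C P X"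
    "\<And>x. x \<in> carrier (TO Q) \<Longrightarrow> TM p1 (TM i1 x) = x"
    "\<And>x. x \<in> carrier (TO X) \<Longrightarrow> TM p2 (TM i2 x) = x"
    "\<And>x. x \<in> carrier (TO X) \<Longrightarrow> TM p1 (TM i2 x) = \<zero>\<^bsub>TO Q\<^esub>"
    "\<And>x. x \<in> carrier (TO Q) \<Longrightarrow> TM p2 (TM i1 x) = \<zero>\<^bsub>TO X\<^esub>"
    "\<And>y. y \<in> carrier (TO P) \<Longrightarrow> y = TM i1 (TM p1 y) \<oplus>\<^bsub>TO P\<^esub> TM i2 (TM p2 y)"
proof -
  obtain P i1 i2 p1 p2 where P: "P \<in> Obj C"
        "i1 \<in> Hom C Q P" "i2 \<in> Hom C X P" "p1 \<in> Hom C P Q" "p2 \<in> Hom C P X"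
        "comp C p1 i1 = ident C Q" "comp C p2 i2 = ident C X"
        "comp C p1 i2 = hzero C X Q" "comp C p2 i1 = hzero C Q X"
        "hadd C (comp C i1 p1) (comp C i2 p2) = ident C P"
    using binary_biproduct[OF assms] by blast
  show thesis
  proof (rule that[OF P(1-5)])
    show "TM p1 (TM i1 x) = x" if "x \<in> carrier (TO Q)" for x
      using T_comp[OF P(2,4) that] P(6) T_ident[OF assms(1) that] by simp
    show "TM p2 (TM i2 x) = x" if "x \<in> carrier (TO X)" for x
      using T_comp[OF P(3,5) that] P(7) T_ident[OF assms(2) that] by simp
    show "TM p1 (TM i2 x) = \<zero>\<^bsub>TO Q\<^esub>" if "x \<in> carrier (TO X)" for x
      using T_comp[OF P(3,4) that] P(8) T_hzero[OF assms(2,1) that] by simp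
    show "TM p2 (TM i1 x) = \<zero>\<^bsub>TO X\<^esub>" if "x \<in> carrier (TO Q)" for x
      using T_comp[OF P(2,5) that] P(9) T_hzero[OF assms that] by simp
    show "y = TM i1 (TM p1 y) \<oplus>\<^bsub>TO P\<^esub> TM i2 (TM p2 y)" if "y \<in> carrier (TO P)" for y
      using T_ident[OF P(1) that] P(10) T_hadd[OF comp_hom[OF P(4,2)] comp_hom[OF P(5,3)] that]
        T_comp[OF P(4,2) that] T_comp[OF P(5,3) that] by simp
  qed
qed

text \<open>Biproducts are only ever used through \<open>T\<close>, so their identities are stated after applying
  \<open>T\<close>; since \<open>T\<close> is faithful this loses nothing.\<close>
definition is_biprod :: "'o list \<Rightarrow> 'o \<Rightarrow> (nat \<Rightarrow> 'm) \<Rightarrow> (nat \<Rightarrow> 'm) \<Rightarrow> bool" where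
  "is_biprod os Q \<iota> \<pi> \<longleftrightarrow> Q \<in> Obj C \<and>
     (\<forall>j < length os. \<iota> j \<in> Hom C (os ! j) Q \<and> \<pi> j \<in> Hom C Q (os ! j)) \<and>
     (\<forall>j < length os. \<forall>k < length os. \<forall>x \<in> carrier (TO (os ! k)).
        TM (\<pi> j) (TM (\<iota> k) x) = (if j = k then x else \<zero>\<^bsub>TO (os ! j)\<^esub>)) \<and>
     (\<forall>y \<in> carrier (TO Q). \<forall>y' \<in> carrier (TO Q).
        (\<forall>j < length os. TM (\<pi> j) y = TM (\<pi> j) y') \<longrightarrow> y = y')"

lemma biprod_snoc:
  assumes B: "is_biprod os Q \<iota> \<pi>" and X: "X \<in> Obj C"
  shows "\<exists>P \<iota>' \<pi>'. is_biprod (os @ [X]) P \<iota>' \<pi>'"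
proof -
  let ?n = "length os"
  have Q: "Q \<in> Obj C"
    and B_hom: "\<And>j. j < ?n \<Longrightarrow> \<iota> j \<in> Hom C (os ! j) Q \<and> \<pi> j \<in> Hom C Q (os ! j)"
    and B_delta: "\<And>j k x. j < ?n \<Longrightarrow> k < ?n \<Longrightarrow> x \<in> carrier (TO (os ! k)) \<Longrightarrow>
        TM (\<pi> j) (TM (\<iota> k) x) = (if j = k then x else \<zero>\<^bsub>TO (os ! j)\<^esub>)"
    and B_inj: "\<And>y y'. y \<in> carrier (TO Q) \<Longrightarrow> y' \<in> carrier (TO Q) \<Longrightarrow>
        (\<And>j. j < ?n \<Longrightarrow> TM (\<pi> j) y = TM (\<pi> j) y') \<Longrightarrow> y = y'"
    using B unfolding is_biprod_def by blast+
  obtain P i1 i2 p1 p2 where P: "P \<in> Obj C"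
    "i1 \<in> Hom C Q P" "i2 \<in> Hom C X P" "p1 \<in> Hom C P Q" "p2 \<in> Hom C P X"
    "\<And>x. x \<in> carrier (TO Q) \<Longrightarrow> TM p1 (TM i1 x) = x"
    "\<And>x. x \<in> carrier (TO X) \<Longrightarrow> TM p2 (TM i2 x) = x"
    "\<And>x. x \<in> carrier (TO X) \<Longrightarrow> TM p1 (TM i2 x) = \<zero>\<^bsub>TO Q\<^esub>"
    "\<And>x. x \<in> carrier (TO Q) \<Longrightarrow> TM p2 (TM i1 x) = \<zero>\<^bsub>TO X\<^esub>"
    "\<And>y. y \<in> carrier (TO P) \<Longrightarrow> y = TM i1 (TM p1 y) \<oplus>\<^bsub>TO P\<^esub> TM i2 (TM p2 y)"
    using binary_biproduct_T[OF Q X] by blast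
  define \<iota>' where "\<iota>' j = (if j < ?n then comp C i1 (\<iota> j) else i2)" for j
  define \<pi>' where "\<pi>' j = (if j < ?n then comp C (\<pi> j) p1 else p2)" for j
  have nth: "\<And>j. j < ?n \<Longrightarrow> (os @ [X]) ! j = os ! j" "(os @ [X]) ! ?n = X"
    by (simp_all add: nth_append)
  have less_Suc: "j < length (os @ [X]) \<longleftrightarrow> j < ?n \<or> j = ?n" for j by auto
  have hom': "\<iota>' j \<in> Hom C ((os @ [X]) ! j) P \<and> \<pi>' j \<in> Hom C P ((os @ [X]) ! j)"
    if "j < length (os @ [X])" for j
    using that comp_hom[OF conjunct1[OF B_hom] P(2)] comp_hom[OF P(4) conjunct2[OF B_hom]] P(3,5) nth
    unfolding \<iota>'_def \<pi>'_def less_Suc by auto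
  have T\<iota>': "TM (\<iota>' k) x = TM i1 (TM (\<iota> k) x)" if "k < ?n" "x \<in> carrier (TO (os ! k))" for k x
    using that T_comp[OF conjunct1[OF B_hom] P(2)] unfolding \<iota>'_def by simp
  have T\<pi>': "TM (\<pi>' j) y = TM (\<pi> j) (TM p1 y)" if "j < ?n" "y \<in> carrier (TO P)" for j y
    using that T_comp[OF P(4) conjunct2[OF B_hom]] unfolding \<pi>'_def by simp
  have delta': "TM (\<pi>' j) (TM (\<iota>' k) x) = (if j = k then x else \<zero>\<^bsub>TO ((os @ [X]) ! j)\<^esub>)"
    if j: "j < length (os @ [X])" and k: "k < length (os @ [X])"
      and x: "x \<in> carrier (TO ((os @ [X]) ! k))" for j k x
  proof (cases "k < ?n")
    case True
    then have x: "x \<in> carrier (TO (os ! k))" using x nth by simp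
    have \<iota>x: "TM (\<iota> k) x \<in> carrier (TO Q)" using T_closed B_hom True x by blast
    show ?thesis
    proof (cases "j < ?n")
      case True
      then show ?thesis
        using \<open>k < ?n\<close> x \<iota>x T\<iota>' T\<pi>' T_closed[OF P(2)] P(6) B_delta nth by simp
    next
      case False
      then have "j = ?n" using j by simp
      then show ?thesis using \<open>k < ?n\<close> x \<iota>x T\<iota>' P(9) nth unfolding \<pi>'_def by auto
    qed
  next
    case False
    then have k: "k = ?n" using k by simp
    then have x: "x \<in> carrier (TO X)" using x nth by simp
    show ?thesis
    proof (cases "j < ?n")
      case True
      have "TM (\<iota>' k) x = TM i2 x" by (simp add: \<iota>'_def k)
      then show ?thesis
        using T\<pi>'[OF True T_closed[OF P(3) x]] P(8)[OF x] T_zero[OF conjunct2[OF B_hom[OF True]]]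
          k nth(1)[OF True] True by simp
    next
      case False
      then have "j = ?n" using j by simp
      then show ?thesis using k x P(7) unfolding \<iota>'_def \<pi>'_def by simp
    qed
  qed
  have inj': "y = y'"
    if y: "y \<in> carrier (TO P)" "y' \<in> carrier (TO P)"
      and e: "\<forall>j < length (os @ [X]). TM (\<pi>' j) y = TM (\<pi>' j) y'" for y y'
  proof -
    have "TM (\<pi> j) (TM p1 y) = TM (\<pi> j) (TM p1 y')" if "j < ?n" for j
      using e T\<pi>'[OF that y(1)] T\<pi>'[OF that y(2)] that by simp
    then have "TM p1 y = TM p1 y'" using B_inj T_closed[OF P(4)] y by blast
    moreover have "TM p2 y = TM p2 y'" using e unfolding \<pi>'_def by auto
    ultimately show ?thesis using P(10) y by metis
  qed
  have "is_biprod (os @ [X]) P \<iota>' \<pi>'"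
    unfolding is_biprod_def using P(1) hom' delta' inj' by (intro conjI allI ballI impI) simp_all
  then show ?thesis by blast
qed

lemma biprod_exists: "set os \<subseteq> Obj C \<Longrightarrow> \<exists>Q \<iota> \<pi>. is_biprod os Q \<iota> \<pi>"
proof (induction os rule: rev_induct)
  case Nil
  obtain Z where Z: "Z \<in> Obj C" "\<forall>X \<in> Obj C. (\<exists>!u. u \<in> Hom C X Z) \<and> (\<exists>!u. u \<in> Hom C Z X)"
    using zero_object by blast
  have "ident C Z = hzero C Z Z"
    using Z ident_hom[OF Z(1)] hzero_hom[OF Z(1) Z(1)] by (auto dest: ex1_implies_ex)
  then have "y = \<zero>\<^bsub>TO Z\<^esub>" if "y \<in> carrier (TO Z)" for y
    using T_ident[OF Z(1) that] T_hzero[OF Z(1) Z(1) that] by simp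
  then have "is_biprod [] Z undefined undefined"
    unfolding is_biprod_def using Z(1) by auto
  then show ?case by blast
next
  case (snoc X os)
  then show ?case using biprod_snoc by auto
qed

lemma biprod_power_exists: "W \<in> Obj C \<Longrightarrow> \<exists>Q \<iota> \<pi>. is_biprod (replicate n W) Q \<iota> \<pi>"
  by (rule biprod_exists) (simp add: set_replicate_conv_if)

lemma
  assumes "is_biprod os Q \<iota> \<pi>"
  shows biprod_obj: "Q \<in> Obj C"
    and biprod_in_hom: "j < length os \<Longrightarrow> \<iota> j \<in> Hom C (os ! j) Q"
    and biprod_out_hom: "j < length os \<Longrightarrow> \<pi> j \<in> Hom C Q (os ! j)"
    and biprod_out_in: "j < length os \<Longrightarrow> k < length os \<Longrightarrow> x \<in> carrier (TO (os ! k)) \<Longrightarrow>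
      TM (\<pi> j) (TM (\<iota> k) x) = (if j = k then x else \<zero>\<^bsub>TO (os ! j)\<^esub>)"
    and biprod_eqI: "y \<in> carrier (TO Q) \<Longrightarrow> y' \<in> carrier (TO Q) \<Longrightarrow>
      (\<And>j. j < length os \<Longrightarrow> TM (\<pi> j) y = TM (\<pi> j) y') \<Longrightarrow> y = y'"
  using assms unfolding is_biprod_def by blast+

lemma biprod_copair:
  assumes B: "is_biprod os S \<iota> \<pi>" and W: "W \<in> Obj C"
    and a: "\<And>j. j < length os \<Longrightarrow> a j \<in> Hom C (os ! j) W"
  shows "\<exists>\<alpha> \<in> Hom C S W.
    (\<forall>s \<in> carrier (TO S). TM \<alpha> s = finsum (TO W) (\<lambda>j. TM (a j) (TM (\<pi> j) s)) {..<length os}) \<and>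
    (\<forall>k < length os. \<forall>x \<in> carrier (TO (os ! k)). TM \<alpha> (TM (\<iota> k) x) = TM (a k) x)"
proof -
  let ?n = "length os"
  interpret H: module R "hom_module C S W" using hom_module biprod_obj[OF B] W .
  interpret TW: module R "TO W" using T_module W .
  define \<alpha> where "\<alpha> = finsum (hom_module C S W) (\<lambda>j. comp C (a j) (\<pi> j)) {..<?n}"
  have aj: "(\<lambda>j. comp C (a j) (\<pi> j)) \<in> {..<?n} \<rightarrow> Hom C S W"
    using comp_hom[OF biprod_out_hom[OF B] a] by blast
  have \<alpha>_hom: "\<alpha> \<in> Hom C S W" unfolding \<alpha>_def using H.finsum_closed aj by simp
  have T\<alpha>: "TM \<alpha> s = finsum (TO W) (\<lambda>j. TM (a j) (TM (\<pi> j) s)) {..<?n}"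
    if s: "s \<in> carrier (TO S)" for s
  proof -
    have "TM \<alpha> s = finsum (TO W) (\<lambda>j. TM (comp C (a j) (\<pi> j)) s) {..<?n}"
      unfolding \<alpha>_def using T_finsum_hom[OF biprod_obj[OF B] W _ aj s] by simp
    also have "\<dots> = finsum (TO W) (\<lambda>j. TM (a j) (TM (\<pi> j) s)) {..<?n}"
      using s T_comp[OF biprod_out_hom[OF B] a] T_closed[OF a T_closed[OF biprod_out_hom[OF B]]]
      by (intro TW.finsum_cong') auto
    finally show ?thesis .
  qed
  have "TM \<alpha> (TM (\<iota> k) x) = TM (a k) x" if k: "k < ?n" and x: "x \<in> carrier (TO (os ! k))" for k x
  proof -
    have "TM \<alpha> (TM (\<iota> k) x) = finsum (TO W) (\<lambda>j. TM (a j) (TM (\<pi> j) (TM (\<iota> k) x))) {..<?n}"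
      using T\<alpha>[OF T_closed[OF biprod_in_hom[OF B k] x]] .
    also have "\<dots> = finsum (TO W) (\<lambda>j. if k = j then TM (a k) x else \<zero>\<^bsub>TO W\<^esub>) {..<?n}"
      using biprod_out_in[OF B _ k x] T_zero[OF a] T_closed[OF a[OF k] x]
      by (intro TW.finsum_cong') auto
    also have "\<dots> = TM (a k) x" using k TW.finsum_singleton[of k] T_closed[OF a[OF k] x] by simp
    finally show ?thesis .
  qed
  then show ?thesis using \<alpha>_hom T\<alpha> by blast
qed

lemma biprod_tuple:
  assumes B: "is_biprod os Q \<iota> \<pi>" and x: "\<And>j. j < length os \<Longrightarrow> x j \<in> carrier (TO (os ! j))"
  shows "\<exists>y \<in> carrier (TO Q). \<forall>j < length os. TM (\<pi> j) y = x j"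
proof -
  let ?n = "length os"
  interpret TQ: module R "TO Q" using T_module biprod_obj[OF B] .
  define y where "y = finsum (TO Q) (\<lambda>k. TM (\<iota> k) (x k)) {..<?n}"
  have \<iota>x: "(\<lambda>k. TM (\<iota> k) (x k)) \<in> {..<?n} \<rightarrow> carrier (TO Q)"
    using T_closed[OF biprod_in_hom[OF B] x] by blast
  have "TM (\<pi> j) y = x j" if j: "j < ?n" for j
  proof -
    have \<pi>j: "\<pi> j \<in> Hom C Q (os ! j)" using biprod_out_hom[OF B j] .
    interpret TJ: module R "TO (os ! j)" using T_module hom_objs[OF \<pi>j] by blast
    have "TM (\<pi> j) y = finsum (TO (os ! j)) (\<lambda>k. TM (\<pi> j) (TM (\<iota> k) (x k))) {..<?n}"
      unfolding y_def using linear_map_finsum[OF TQ.module_axioms TJ.module_axioms T_linear[OF \<pi>j] _ \<iota>x]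
      by simp
    also have "\<dots> = finsum (TO (os ! j)) (\<lambda>k. if j = k then x j else \<zero>\<^bsub>TO (os ! j)\<^esub>) {..<?n}"
      using biprod_out_in[OF B j _ x] x[OF j] by (intro TJ.finsum_cong') auto
    also have "\<dots> = x j" using j TJ.finsum_singleton[of j] x[OF j] by simp
    finally show ?thesis .
  qed
  moreover have "y \<in> carrier (TO Q)" unfolding y_def using TQ.finsum_closed[OF \<iota>x] .
  ultimately show ?thesis by blast
qed

lemma biprod_linear_map_into:
  assumes B: "is_biprod os Q \<iota> \<pi>" and M: "module R M"
    and f: "\<And>x. x \<in> carrier M \<Longrightarrow> f x \<in> carrier (TO Q)"
    and lin: "\<And>j. j < length os \<Longrightarrow> linear_map R M (TO (os ! j)) (\<lambda>x. TM (\<pi> j) (f x))"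
  shows "linear_map R M (TO Q) f"
proof (rule linear_mapI)
  interpret M: module R M by fact
  interpret TQ: module R "TO Q" using T_module[OF biprod_obj[OF B]] .
  show "f x \<in> carrier (TO Q)" if "x \<in> carrier M" for x using f that .
  show "f (x \<oplus>\<^bsub>M\<^esub> y) = f x \<oplus>\<^bsub>TO Q\<^esub> f y" if x: "x \<in> carrier M" and y: "y \<in> carrier M" for x y
  proof (rule biprod_eqI[OF B])
    show "f (x \<oplus>\<^bsub>M\<^esub> y) \<in> carrier (TO Q)" "f x \<oplus>\<^bsub>TO Q\<^esub> f y \<in> carrier (TO Q)"
      using f x y by simp_all
    fix j assume j: "j < length os"
    show "TM (\<pi> j) (f (x \<oplus>\<^bsub>M\<^esub> y)) = TM (\<pi> j) (f x \<oplus>\<^bsub>TO Q\<^esub> f y)"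
      using linear_map_add[OF lin[OF j] x y] T_add[OF biprod_out_hom[OF B j] f[OF x] f[OF y]] by simp
  qed
  show "f (r \<odot>\<^bsub>M\<^esub> x) = r \<odot>\<^bsub>TO Q\<^esub> f x" if r: "r \<in> carrier R" and x: "x \<in> carrier M" for r x
  proof (rule biprod_eqI[OF B])
    show "f (r \<odot>\<^bsub>M\<^esub> x) \<in> carrier (TO Q)" "r \<odot>\<^bsub>TO Q\<^esub> f x \<in> carrier (TO Q)"
      using f x r by simp_all
    fix j assume j: "j < length os"
    show "TM (\<pi> j) (f (r \<odot>\<^bsub>M\<^esub> x)) = TM (\<pi> j) (r \<odot>\<^bsub>TO Q\<^esub> f x)"
      using linear_map_smult[OF lin[OF j] r x] T_smult[OF biprod_out_hom[OF B j] r f[OF x]] by simp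
  qed
qed

text \<open>Evaluation at a list of generators of \<open>T A\<close>, with values in \<open>T(B\<^sup>k)\<close>.\<close>
lemma hom_module_embedding:
  assumes A: "A \<in> Obj C" and B: "B \<in> Obj C"
  shows "\<exists>Q \<Theta>. Q \<in> Obj C \<and> linear_map R (hom_module C A B) (TO Q) \<Theta> \<and> inj_on \<Theta> (Hom C A B)"
proof -
  obtain us where us: "set us \<subseteq> carrier (TO A)" "mspan R (TO A) (set us) = carrier (TO A)"
    using finitely_generated_spanning_list[OF T_module[OF A] T_finitely_generated[OF A]] by blast
  let ?k = "length us"
  obtain Q \<iota> \<pi> where Bp: "is_biprod (replicate ?k B) Q \<iota> \<pi>"
    using biprod_power_exists[OF B] by blast
  define \<Theta> where "\<Theta> h = (SOME y. y \<in> carrier (TO Q) \<and> (\<forall>j < ?k. TM (\<pi> j) y = TM h (us ! j)))" for h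
  have \<Theta>: "\<Theta> h \<in> carrier (TO Q) \<and> (\<forall>j < ?k. TM (\<pi> j) (\<Theta> h) = TM h (us ! j))"
    if h: "h \<in> Hom C A B" for h
  proof -
    have "TM h (us ! j) \<in> carrier (TO (replicate ?k B ! j))" if "j < length (replicate ?k B)" for j
      using that T_closed[OF h subsetD[OF us(1) nth_mem]] by simp
    from biprod_tuple[OF Bp this]
    have "\<exists>y. y \<in> carrier (TO Q) \<and> (\<forall>j < ?k. TM (\<pi> j) y = TM h (us ! j))"
      by (simp add: Bex_def)
    then show ?thesis unfolding \<Theta>_def by (rule someI_ex)
  qed
  have "linear_map R (hom_module C A B) (TO Q) \<Theta>"
  proof (rule biprod_linear_map_into[OF Bp hom_module[OF A B]])
    show "\<Theta> h \<in> carrier (TO Q)" if "h \<in> carrier (hom_module C A B)" for h using \<Theta> that by simp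
    fix j assume "j < length (replicate ?k B)"
    then have j: "j < ?k" by simp
    have "linear_map R (hom_module C A B) (TO B) (\<lambda>h. TM h (us ! j))"
      using T_eval_linear subsetD[OF us(1) nth_mem[OF j]] .
    moreover have "linear_map R (hom_module C A B) (TO B) (\<lambda>h. TM h (us ! j)) =
        linear_map R (hom_module C A B) (TO B) (\<lambda>h. TM (\<pi> j) (\<Theta> h))"
      by (rule linear_map_cong[OF hom_module[OF A B]]) (use \<Theta> j in simp)
    ultimately show "linear_map R (hom_module C A B) (TO (replicate ?k B ! j)) (\<lambda>h. TM (\<pi> j) (\<Theta> h))"
      using j by simp
  qed
  moreover have "h = h'" if h: "h \<in> Hom C A B" "h' \<in> Hom C A B" and "\<Theta> h = \<Theta> h'" for h h'
  proof (rule faithful[OF h])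
    have agree: "TM h u = TM h' u" if "u \<in> set us" for u
      using \<Theta>[OF h(1)] \<Theta>[OF h(2)] \<open>\<Theta> h = \<Theta> h'\<close> that by (auto simp: in_set_conv_nth)
    fix x assume "x \<in> carrier (TO A)"
    then show "TM h x = TM h' x"
      using module.linear_map_eq_on_span[OF T_module[OF A] T_module[OF B] T_linear[OF h(1)] T_linear[OF h(2)] us(1) agree]
        us(2) by simp
  qed
  ultimately show ?thesis using biprod_obj[OF Bp] unfolding inj_on_def by blast
qed

lemma biprod_commutant:
  assumes B: "is_biprod xs W \<iota> \<pi>" and j: "j < length xs"
    and e: "linear_map R (TO W) (TO W) e"
    and ec: "\<forall>g \<in> Hom C W W. \<forall>y \<in> carrier (TO W). TM g (e y) = e (TM g y)"
  shows biprod_commutant_out: "\<And>y. y \<in> carrier (TO W) \<Longrightarrow>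
      TM (\<pi> j) (e y) = TM (\<pi> j) (e (TM (\<iota> j) (TM (\<pi> j) y)))"
    and biprod_commutant_in: "\<And>v. v \<in> carrier (TO (xs ! j)) \<Longrightarrow>
      e (TM (\<iota> j) v) = TM (\<iota> j) (TM (\<pi> j) (e (TM (\<iota> j) v)))"
    and biprod_commutant_hom: "\<And>k m v. k < length xs \<Longrightarrow> m \<in> Hom C (xs ! j) (xs ! k) \<Longrightarrow>
      v \<in> carrier (TO (xs ! j)) \<Longrightarrow>
      TM m (TM (\<pi> j) (e (TM (\<iota> j) v))) = TM (\<pi> k) (e (TM (\<iota> k) (TM m v)))"
proof -
  have \<iota>: "\<iota> j \<in> Hom C (xs ! j) W" and \<pi>: "\<pi> j \<in> Hom C W (xs ! j)"
    using biprod_in_hom[OF B j] biprod_out_hom[OF B j] .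
  have E: "comp C (\<iota> j) (\<pi> j) \<in> Hom C W W" using comp_hom[OF \<pi> \<iota>] .
  have TE: "TM (comp C (\<iota> j) (\<pi> j)) y = TM (\<iota> j) (TM (\<pi> j) y)" if "y \<in> carrier (TO W)" for y
    using T_comp[OF \<pi> \<iota> that] .
  have \<pi>\<iota>: "TM (\<pi> j) (TM (\<iota> j) v) = v" if "v \<in> carrier (TO (xs ! j))" for v
    using biprod_out_in[OF B j j that] by simp
  have ecl: "e y \<in> carrier (TO W)" if "y \<in> carrier (TO W)" for y using linear_map_closed[OF e that] .
  show "TM (\<pi> j) (e y) = TM (\<pi> j) (e (TM (\<iota> j) (TM (\<pi> j) y)))" if y: "y \<in> carrier (TO W)" for y
  proof -
    have "TM (\<pi> j) (e y) = TM (\<pi> j) (TM (comp C (\<iota> j) (\<pi> j)) (e y))"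
      using TE[OF ecl[OF y]] \<pi>\<iota>[OF T_closed[OF \<pi> ecl[OF y]]] by simp
    then show ?thesis using ec E y TE by simp
  qed
  show in_eq: "e (TM (\<iota> j) v) = TM (\<iota> j) (TM (\<pi> j) (e (TM (\<iota> j) v)))"
    if v: "v \<in> carrier (TO (xs ! j))" for v
  proof -
    have \<iota>v: "TM (\<iota> j) v \<in> carrier (TO W)" using T_closed[OF \<iota> v] .
    have "e (TM (\<iota> j) v) = e (TM (comp C (\<iota> j) (\<pi> j)) (TM (\<iota> j) v))"
      using TE[OF \<iota>v] \<pi>\<iota>[OF v] by simp
    also have "\<dots> = TM (comp C (\<iota> j) (\<pi> j)) (e (TM (\<iota> j) v))"
      by (rule ec[rule_format, OF E \<iota>v, symmetric])
    also have "\<dots> = TM (\<iota> j) (TM (\<pi> j) (e (TM (\<iota> j) v)))" using TE[OF ecl[OF \<iota>v]] .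
    finally show ?thesis .
  qed
  fix k m v assume k: "k < length xs" and m: "m \<in> Hom C (xs ! j) (xs ! k)" and v: "v \<in> carrier (TO (xs ! j))"
  have \<iota>k: "\<iota> k \<in> Hom C (xs ! k) W" and \<pi>k: "\<pi> k \<in> Hom C W (xs ! k)"
    using biprod_in_hom[OF B k] biprod_out_hom[OF B k] .
  let ?h = "comp C (\<iota> k) (comp C m (\<pi> j))"
  have h: "?h \<in> Hom C W W" using comp_hom[OF comp_hom[OF \<pi> m] \<iota>k] .
  have Th: "TM ?h y = TM (\<iota> k) (TM m (TM (\<pi> j) y))" if "y \<in> carrier (TO W)" for y
    using T_comp[OF comp_hom[OF \<pi> m] \<iota>k that] T_comp[OF \<pi> m that] by simp
  have \<iota>v: "TM (\<iota> j) v \<in> carrier (TO W)" using T_closed[OF \<iota> v] .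
  have ev: "TM (\<pi> j) (e (TM (\<iota> j) v)) \<in> carrier (TO (xs ! j))" using T_closed[OF \<pi> ecl[OF \<iota>v]] .
  have "TM (\<pi> k) (e (TM (\<iota> k) (TM m v))) = TM (\<pi> k) (e (TM ?h (TM (\<iota> j) v)))"
    using Th[OF \<iota>v] \<pi>\<iota>[OF v] by simp
  also have "\<dots> = TM (\<pi> k) (TM ?h (e (TM (\<iota> j) v)))" using ec h \<iota>v by simp
  also have "\<dots> = TM m (TM (\<pi> j) (e (TM (\<iota> j) v)))"
    using Th[OF ecl[OF \<iota>v]] biprod_out_in[OF B k k T_closed[OF m ev]] by simp
  finally show "TM m (TM (\<pi> j) (e (TM (\<iota> j) v))) = TM (\<pi> k) (e (TM (\<iota> k) (TM m v)))" ..
qed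

lemma commutant_End_TF:
  assumes B: "is_biprod xs W \<iota> \<pi>"
    and idx: "\<And>p. p \<in> set xs \<Longrightarrow> idx p < length xs \<and> xs ! idx p = p"
    and e: "linear_map R (TO W) (TO W) e"
    and ec: "\<forall>g \<in> Hom C W W. \<forall>y \<in> carrier (TO W). TM g (e y) = e (TM g y)"
  shows "(\<lambda>p v. TM (\<pi> (idx p)) (e (TM (\<iota> (idx p)) v))) \<in> End_TF R C TO TM (set xs)"
  unfolding End_TF_def lin_map_eq_linear_map
proof (intro CollectI conjI ballI)
  fix p assume p: "p \<in> set xs"
  show "linear_map R (TO p) (TO p) (\<lambda>v. TM (\<pi> (idx p)) (e (TM (\<iota> (idx p)) v)))"
    using biprod_in_hom[OF B] biprod_out_hom[OF B] idx[OF p]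
    by (metis T_linear linear_map_compose e)
next
  fix p q m v assume p: "p \<in> set xs" and q: "q \<in> set xs" and m: "m \<in> Hom C p q"
    and v: "v \<in> carrier (TO p)"
  show "TM m (TM (\<pi> (idx p)) (e (TM (\<iota> (idx p)) v))) = TM (\<pi> (idx q)) (e (TM (\<iota> (idx q)) (TM m v)))"
    using biprod_commutant_hom[OF B _ e ec, of "idx p" "idx q" m v] idx[OF p] idx[OF q] m v by simp
qed

section \<open>The double centralizer theorem\<close>

lemma generic_point_exists:
  assumes W: "W \<in> Obj C"
  shows "\<exists>Q v. Q \<in> Obj C \<and> v \<in> carrier (TO Q) \<and> (\<forall>y \<in> carrier (TO W). \<exists>h \<in> Hom C Q W. TM h v = y)"
proof -
  obtain vs where vs: "set vs \<subseteq> carrier (TO W)" "mspan R (TO W) (set vs) = carrier (TO W)"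
    using finitely_generated_spanning_list[OF T_module[OF W] T_finitely_generated[OF W]] by blast
  let ?n = "length vs"
  obtain Q \<iota> \<pi> where Bp: "is_biprod (replicate ?n W) Q \<iota> \<pi>"
    using biprod_power_exists[OF W] by blast
  have Q: "Q \<in> Obj C" using biprod_obj[OF Bp] .
  have "vs ! j \<in> carrier (TO (replicate ?n W ! j))" if "j < length (replicate ?n W)" for j
    using that subsetD[OF vs(1) nth_mem] by simp
  from biprod_tuple[OF Bp this]
  obtain v where v: "v \<in> carrier (TO Q)" "\<And>j. j < ?n \<Longrightarrow> TM (\<pi> j) v = vs ! j" by auto
  have "set vs \<subseteq> (\<lambda>h. TM h v) ` carrier (hom_module C Q W)"
  proof
    fix u assume "u \<in> set vs"
    then obtain j where "j < ?n" "u = vs ! j" by (auto simp: in_set_conv_nth)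
    then show "u \<in> (\<lambda>h. TM h v) ` carrier (hom_module C Q W)"
      using v(2) biprod_out_hom[OF Bp] by force
  qed
  then have onto: "(\<lambda>h. TM h v) ` Hom C Q W = carrier (TO W)"
    using linear_map_onto_if_spanning[OF hom_module[OF Q W] T_module[OF W] T_eval_linear[OF v(1)]] vs(2)
    by simp
  have "\<exists>h \<in> Hom C Q W. TM h v = y" if "y \<in> carrier (TO W)" for y
    using that[folded onto] by blast
  then show ?thesis using Q v(1) by blast
qed

lemma transport_endomorphism:
  assumes Q: "Q \<in> Obj C" and W: "W \<in> Obj C" and v: "v \<in> carrier (TO Q)" and w: "w \<in> carrier (TO Q)"
    and onto: "\<And>y. y \<in> carrier (TO W) \<Longrightarrow> \<exists>h \<in> Hom C Q W. TM h v = y"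
    and ann: "\<And>h. h \<in> Hom C Q W \<Longrightarrow> TM h v = \<zero>\<^bsub>TO W\<^esub> \<Longrightarrow> TM h w = \<zero>\<^bsub>TO W\<^esub>"
  shows "\<exists>e. linear_map R (TO W) (TO W) e \<and>
    (\<forall>g \<in> Hom C W W. \<forall>y \<in> carrier (TO W). TM g (e y) = e (TM g y)) \<and>
    (\<forall>h \<in> Hom C Q W. e (TM h v) = TM h w)"
proof -
  define e where "e y = TM (SOME h. h \<in> Hom C Q W \<and> TM h v = y) w" for y
  have e_eval: "e (TM h v) = TM h w" if h: "h \<in> Hom C Q W" for h
  proof -
    obtain h' where h': "h' \<in> Hom C Q W" "TM h' v = TM h v" and "e (TM h v) = TM h' w"
      unfolding e_def using someI[of "\<lambda>h'. h' \<in> Hom C Q W \<and> TM h' v = TM h v" h] h by blast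
    moreover have "TM (hdiff h' h) v = \<zero>\<^bsub>TO W\<^esub>" using T_hdiff_eq_zero_iff[OF h'(1) h v] h'(2) by simp
    then have "TM (hdiff h' h) w = \<zero>\<^bsub>TO W\<^esub>" using ann hdiff_hom[OF h'(1) h] by blast
    ultimately show ?thesis using T_hdiff_eq_zero_iff[OF h'(1) h w] by simp
  qed
  have "linear_map R (TO W) (TO W) e"
  proof (rule linear_mapI)
    fix y assume "y \<in> carrier (TO W)"
    then obtain h where h: "h \<in> Hom C Q W" "TM h v = y" using onto by blast
    then show "e y \<in> carrier (TO W)" using e_eval[OF h(1)] T_closed[OF h(1) w] by simp
  next
    fix y z assume "y \<in> carrier (TO W)" "z \<in> carrier (TO W)"
    then obtain h k where h: "h \<in> Hom C Q W" "TM h v = y" and k: "k \<in> Hom C Q W" "TM k v = z"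
      using onto by meson
    have "e (y \<oplus>\<^bsub>TO W\<^esub> z) = e (TM (hadd C h k) v)" using T_hadd[OF h(1) k(1) v] h k by simp
    also have "\<dots> = TM h w \<oplus>\<^bsub>TO W\<^esub> TM k w" using e_eval[OF hadd_hom[OF h(1) k(1)]] T_hadd[OF h(1) k(1) w] by simp
    finally show "e (y \<oplus>\<^bsub>TO W\<^esub> z) = e y \<oplus>\<^bsub>TO W\<^esub> e z"
      using e_eval[OF h(1), unfolded h(2)] e_eval[OF k(1), unfolded k(2)] by simp
  next
    fix r y assume r: "r \<in> carrier R" and "y \<in> carrier (TO W)"
    then obtain h where h: "h \<in> Hom C Q W" "TM h v = y" using onto by blast
    have "e (r \<odot>\<^bsub>TO W\<^esub> y) = e (TM (hsmult C r h) v)" using T_hsmult[OF h(1) r v] h by simp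
    also have "\<dots> = r \<odot>\<^bsub>TO W\<^esub> TM h w" using e_eval[OF hsmult_hom[OF r h(1)]] T_hsmult[OF h(1) r w] by simp
    finally show "e (r \<odot>\<^bsub>TO W\<^esub> y) = r \<odot>\<^bsub>TO W\<^esub> e y" using e_eval[OF h(1), unfolded h(2)] by simp
  qed
  moreover have "TM g (e y) = e (TM g y)" if g: "g \<in> Hom C W W" and "y \<in> carrier (TO W)" for g y
  proof -
    obtain h where h: "h \<in> Hom C Q W" "TM h v = y" using onto \<open>y \<in> carrier (TO W)\<close> by blast
    have "e (TM g y) = e (TM (comp C g h) v)" using T_comp[OF h(1) g v] h by simp
    also have "\<dots> = TM g (TM h w)" using e_eval[OF comp_hom[OF h(1) g]] T_comp[OF h(1) g w] by simp
    finally show ?thesis using e_eval[OF h(1), unfolded h(2)] by simp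
  qed
  ultimately show ?thesis using e_eval by blast
qed


lemma lift_through_jointly_surjective:
  assumes W: "W \<in> Obj C" and V: "V \<in> Obj C" and P: "P \<in> Obj C"
    and a: "\<And>j. j < (n::nat) \<Longrightarrow> a j \<in> Hom C P W" and b: "\<And>j. j < n \<Longrightarrow> b j \<in> Hom C P V"
    and ba: "\<And>j p. j < n \<Longrightarrow> p \<in> carrier (TO P) \<Longrightarrow> TM (b j) p = \<phi> (TM (a j) p)"
    and \<phi>: "linear_map R (TO W) (TO V) \<phi>"
    and spans: "mspan R (TO W) G = carrier (TO W)" and G: "G \<subseteq> (\<Union>j < n. TM (a j) ` carrier (TO P))"
  shows "\<exists>u \<in> Hom C W V. \<forall>y \<in> carrier (TO W). TM u y = \<phi> y"
proof -
  obtain S \<iota> \<pi> where S: "is_biprod (replicate n P) S \<iota> \<pi>" using biprod_power_exists[OF P] by blast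
  have \<pi>s: "TM (\<pi> j) s \<in> carrier (TO P)" if "j < n" "s \<in> carrier (TO S)" for j s
    using T_closed[OF biprod_out_hom[OF S] that(2)] that(1) by simp
  obtain \<alpha> where \<alpha>: "\<alpha> \<in> Hom C S W"
    "\<And>s. s \<in> carrier (TO S) \<Longrightarrow> TM \<alpha> s = finsum (TO W) (\<lambda>j. TM (a j) (TM (\<pi> j) s)) {..<n}"
    "\<And>k x. k < n \<Longrightarrow> x \<in> carrier (TO P) \<Longrightarrow> TM \<alpha> (TM (\<iota> k) x) = TM (a k) x"
    using biprod_copair[OF S W, of a] a by auto
  obtain \<beta> where \<beta>: "\<beta> \<in> Hom C S V"
    "\<And>s. s \<in> carrier (TO S) \<Longrightarrow> TM \<beta> s = finsum (TO V) (\<lambda>j. TM (b j) (TM (\<pi> j) s)) {..<n}"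
    using biprod_copair[OF S V, of b] b by auto
  have "TM \<beta> s = \<phi> (TM \<alpha> s)" if s: "s \<in> carrier (TO S)" for s
  proof -
    interpret TV: module R "TO V" using T_module[OF V] .
    have x: "(\<lambda>j. TM (a j) (TM (\<pi> j) s)) \<in> {..<n} \<rightarrow> carrier (TO W)"
      using T_closed[OF a \<pi>s[OF _ s]] by simp
    have "TM \<beta> s = finsum (TO V) (\<lambda>j. \<phi> (TM (a j) (TM (\<pi> j) s))) {..<n}"
      unfolding \<beta>(2)[OF s]
      using x linear_map_closed[OF \<phi>] ba[OF _ \<pi>s[OF _ s]] by (intro TV.finsum_cong') auto
    also have "\<dots> = \<phi> (TM \<alpha> s)"
      unfolding \<alpha>(2)[OF s] using linear_map_finsum[OF T_module[OF W] T_module[OF V] \<phi> _ x] by simp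
    finally show ?thesis .
  qed
  moreover have "TM \<alpha> ` carrier (TO S) = carrier (TO W)"
  proof (rule linear_map_onto_if_spanning[OF T_module[OF biprod_obj[OF S]] T_module[OF W] T_linear[OF \<alpha>(1)] _ spans])
    have "TM (a j) ` carrier (TO P) \<subseteq> TM \<alpha> ` carrier (TO S)" if j: "j < n" for j
    proof
      fix y assume "y \<in> TM (a j) ` carrier (TO P)"
      then obtain p where p: "p \<in> carrier (TO P)" "y = TM (a j) p" by blast
      then have "y = TM \<alpha> (TM (\<iota> j) p)" using \<alpha>(3)[OF j p(1)] by simp
      moreover have "TM (\<iota> j) p \<in> carrier (TO S)"
        using T_closed[OF _ p(1)] biprod_in_hom[OF S, of j] j by simp
      ultimately show "y \<in> TM \<alpha> ` carrier (TO S)" by blast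
    qed
    then show "G \<subseteq> TM \<alpha> ` carrier (TO S)" using G by blast
  qed
  ultimately show ?thesis using lift_through_surjection[OF \<alpha>(1) \<beta>(1) _ \<phi>] by blast
qed
end

locale noetherian_fiber_functor = abelian_fiber_functor +
  assumes noetherian: "noetherian_ring R"
begin
lemma hom_module_noetherian:
  assumes A: "A \<in> Obj C" and B: "B \<in> Obj C"
  shows "noetherian_module R (hom_module C A B)"
proof -
  obtain Q \<Theta> where "Q \<in> Obj C" "linear_map R (hom_module C A B) (TO Q) \<Theta>" "inj_on \<Theta> (Hom C A B)"
    using hom_module_embedding[OF A B] by blast
  then show ?thesis
    using noetherian_module_embedding[OF hom_module[OF A B] T_module]
      noetherian_module_if_finitely_generated[OF noetherian T_module T_finitely_generated]
    by simp
qed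

lemma generated_subobject_exists:
  assumes Q: "Q \<in> Obj C" and W: "W \<in> Obj C" and v: "v \<in> carrier (TO Q)"
  shows "\<exists>P \<sigma>. \<sigma> \<in> Hom C P Q \<and> v \<in> TM \<sigma> ` carrier (TO P) \<and>
    (\<forall>w \<in> TM \<sigma> ` carrier (TO P). \<forall>h \<in> Hom C Q W. TM h v = \<zero>\<^bsub>TO W\<^esub> \<longrightarrow> TM h w = \<zero>\<^bsub>TO W\<^esub>)"
proof -
  let ?Ann = "\<lambda>v. {h \<in> Hom C Q W. TM h v = \<zero>\<^bsub>TO W\<^esub>}"
  obtain H where H: "finite H" "H \<subseteq> ?Ann v" "mspan R (hom_module C Q W) H = ?Ann v"
    using hom_module_noetherian[OF Q W] T_eval_kernel_submodule[OF Q W v]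
    unfolding noetherian_module_def by meson
  have "H \<subseteq> Hom C Q W" using H(2) by blast
  then obtain P \<sigma> where \<sigma>: "\<sigma> \<in> Hom C P Q"
    "TM \<sigma> ` carrier (TO P) = {y \<in> carrier (TO Q). \<forall>h \<in> H. TM h y = \<zero>\<^bsub>TO W\<^esub>}"
    using common_kernel_cover_exists[OF H(1) _ Q] by blast
  have "?Ann v \<subseteq> ?Ann w" if w: "w \<in> TM \<sigma> ` carrier (TO P)" for w
  proof -
    have "H \<subseteq> ?Ann w" using w H(2) unfolding \<sigma>(2) by blast
    then show ?thesis
      using module.span_least[OF hom_module[OF Q W] T_eval_kernel_submodule[OF Q W]] w \<sigma>(2) H(3)
      by blast
  qed
  moreover have "v \<in> TM \<sigma> ` carrier (TO P)" using v H(2) unfolding \<sigma>(2) by blast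
  ultimately show ?thesis using \<sigma>(1) by blast
qed

lemma centralizer_transport:
  assumes Q: "Q \<in> Obj C" and W: "W \<in> Obj C" and v: "v \<in> carrier (TO Q)" and w: "w \<in> carrier (TO Q)"
    and onto: "\<And>y. y \<in> carrier (TO W) \<Longrightarrow> \<exists>h \<in> Hom C Q W. TM h v = y"
    and ann: "\<And>h. h \<in> Hom C Q W \<Longrightarrow> TM h v = \<zero>\<^bsub>TO W\<^esub> \<Longrightarrow> TM h w = \<zero>\<^bsub>TO W\<^esub>"
    and comm: "\<And>e. linear_map R (TO W) (TO W) e \<Longrightarrow>
        \<forall>g \<in> Hom C W W. \<forall>y \<in> carrier (TO W). TM g (e y) = e (TM g y) \<Longrightarrow>
        \<forall>y \<in> carrier (TO W). \<phi> (e y) = e (\<phi> y)"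
    and h: "h \<in> Hom C Q W" and h': "h' \<in> Hom C Q W" and hh': "TM h' v = \<phi> (TM h v)"
  shows "TM h' w = \<phi> (TM h w)"
proof -
  obtain e where e: "linear_map R (TO W) (TO W) e"
    "\<forall>g \<in> Hom C W W. \<forall>y \<in> carrier (TO W). TM g (e y) = e (TM g y)"
    "\<forall>h \<in> Hom C Q W. e (TM h v) = TM h w"
    using transport_endomorphism[OF Q W v w onto ann] by blast
  have "TM h' w = e (\<phi> (TM h v))" using e(3)[rule_format, OF h'] hh' by simp
  also have "\<dots> = \<phi> (e (TM h v))" using comm[OF e(1,2)] T_closed[OF h v] by simp
  also have "\<dots> = \<phi> (TM h w)" using e(3)[rule_format, OF h] by simp
  finally show ?thesis .
qed

lemma double_centralizer:
  assumes W: "W \<in> Obj C" and \<phi>: "linear_map R (TO W) (TO W) \<phi>"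
    and comm: "\<And>e. linear_map R (TO W) (TO W) e \<Longrightarrow>
        \<forall>g \<in> Hom C W W. \<forall>y \<in> carrier (TO W). TM g (e y) = e (TM g y) \<Longrightarrow>
        \<forall>y \<in> carrier (TO W). \<phi> (e y) = e (\<phi> y)"
  shows "\<exists>g \<in> Hom C W W. \<forall>y \<in> carrier (TO W). TM g y = \<phi> y"
proof -
  obtain Q v where Q: "Q \<in> Obj C" and v: "v \<in> carrier (TO Q)"
    and onto: "\<And>y. y \<in> carrier (TO W) \<Longrightarrow> \<exists>h \<in> Hom C Q W. TM h v = y"
    using generic_point_exists[OF W] by blast
  obtain P \<sigma> where \<sigma>: "\<sigma> \<in> Hom C P Q" "v \<in> TM \<sigma> ` carrier (TO P)"
    and ann: "\<And>w h. w \<in> TM \<sigma> ` carrier (TO P) \<Longrightarrow> h \<in> Hom C Q W \<Longrightarrow>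
      TM h v = \<zero>\<^bsub>TO W\<^esub> \<Longrightarrow> TM h w = \<zero>\<^bsub>TO W\<^esub>"
    using generated_subobject_exists[OF Q W v] by blast
  obtain s0 where s0: "s0 \<in> carrier (TO P)" "TM \<sigma> s0 = v" using \<sigma>(2) by blast
  obtain vs where vs: "set vs \<subseteq> carrier (TO W)" "mspan R (TO W) (set vs) = carrier (TO W)"
    using finitely_generated_spanning_list[OF T_module[OF W] T_finitely_generated[OF W]] by blast
  let ?n = "length vs"
  have "\<forall>j. \<exists>h. j < ?n \<longrightarrow> h \<in> Hom C Q W \<and> TM h v = vs ! j"
    using onto subsetD[OF vs(1) nth_mem] by metis
  then obtain a where a: "\<And>j. j < ?n \<Longrightarrow> a j \<in> Hom C Q W \<and> TM (a j) v = vs ! j"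
    by (metis choice)
  have "\<forall>j. \<exists>h. j < ?n \<longrightarrow> h \<in> Hom C Q W \<and> TM h v = \<phi> (vs ! j)"
    using onto linear_map_closed[OF \<phi> subsetD[OF vs(1) nth_mem]] by metis
  then obtain b where b: "\<And>j. j < ?n \<Longrightarrow> b j \<in> Hom C Q W \<and> TM (b j) v = \<phi> (vs ! j)"
    by (metis choice)
  show ?thesis
  proof (rule lift_through_jointly_surjective[OF W W hom_objs[OF \<sigma>(1), THEN conjunct1]])
    fix j assume j: "j < ?n"
    show "comp C (a j) \<sigma> \<in> Hom C P W" "comp C (b j) \<sigma> \<in> Hom C P W"
      using comp_hom[OF \<sigma>(1)] a[OF j] b[OF j] by simp_all
    fix p assume p: "p \<in> carrier (TO P)"
    have "TM (b j) (TM \<sigma> p) = \<phi> (TM (a j) (TM \<sigma> p))"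
    proof (rule centralizer_transport[OF Q W v T_closed[OF \<sigma>(1) p] onto ann comm])
      show "TM \<sigma> p \<in> TM \<sigma> ` carrier (TO P)" using p by blast
    qed (use a[OF j] b[OF j] in simp_all)
    then show "TM (comp C (b j) \<sigma>) p = \<phi> (TM (comp C (a j) \<sigma>) p)"
      using T_comp[OF \<sigma>(1) conjunct1[OF a[OF j]] p] T_comp[OF \<sigma>(1) conjunct1[OF b[OF j]] p] by simp
  next
    show "set vs \<subseteq> (\<Union>j < ?n. TM (comp C (a j) \<sigma>) ` carrier (TO P))"
    proof
      fix u assume "u \<in> set vs"
      then obtain j where j: "j < ?n" "u = vs ! j" by (auto simp: in_set_conv_nth)
      then have "u = TM (comp C (a j) \<sigma>) s0"
        using T_comp[OF \<sigma>(1) conjunct1[OF a[OF j(1)]] s0(1)] a[OF j(1)] s0(2) by simp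
      then show "u \<in> (\<Union>j < ?n. TM (comp C (a j) \<sigma>) ` carrier (TO P))" using j(1) s0(1) by blast
    qed
  qed (fact \<phi> vs(2))+
qed

lemma CT_hom_realized:
  assumes \<phi>: "\<phi> \<in> CT_hom R C TO TM X Y"
  shows "\<exists>g \<in> Hom C X Y. \<forall>v \<in> carrier (TO X). TM g v = \<phi> v"
proof -
  obtain F where F: "finite F" "F \<subseteq> Obj C" "X \<in> F" "Y \<in> F" "linear_map R (TO X) (TO Y) \<phi>"
    and \<phi>F: "\<And>e v. e \<in> End_TF R C TO TM F \<Longrightarrow> v \<in> carrier (TO X) \<Longrightarrow> \<phi> (e X v) = e Y (\<phi> v)"
    using \<phi> unfolding CT_hom_def lin_map_eq_linear_map by blast
  obtain xs where xs: "set xs = F" using finite_list[OF F(1)] by blast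
  obtain W \<iota> \<pi> where B: "is_biprod xs W \<iota> \<pi>" using biprod_exists F(2) xs by blast
  have W: "W \<in> Obj C" using biprod_obj[OF B] .
  define idx where "idx p = (SOME j. j < length xs \<and> xs ! j = p)" for p
  have idx: "idx p < length xs \<and> xs ! idx p = p" if "p \<in> set xs" for p
  proof -
    have "\<exists>j. j < length xs \<and> xs ! j = p" using that by (metis in_set_conv_nth)
    then show ?thesis unfolding idx_def by (rule someI_ex)
  qed
  define a b where "a = idx X" and "b = idx Y"
  have a: "a < length xs" "xs ! a = X" using idx[of X] F(3) xs unfolding a_def by simp_all
  have b: "b < length xs" "xs ! b = Y" using idx[of Y] F(4) xs unfolding b_def by simp_all
  have \<iota>a: "\<iota> a \<in> Hom C X W" and \<pi>a: "\<pi> a \<in> Hom C W X" and \<iota>b: "\<iota> b \<in> Hom C Y W" and \<pi>b: "\<pi> b \<in> Hom C W Y"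
    using biprod_in_hom[OF B a(1)] biprod_out_hom[OF B a(1)] biprod_in_hom[OF B b(1)]
      biprod_out_hom[OF B b(1)] a(2) b(2) by simp_all
  define \<phi>' where "\<phi>' y = TM (\<iota> b) (\<phi> (TM (\<pi> a) y))" for y
  have lin: "linear_map R (TO W) (TO W) \<phi>'"
    unfolding \<phi>'_def
    using linear_map_compose[OF linear_map_compose[OF T_linear[OF \<pi>a] F(5)] T_linear[OF \<iota>b]] .
  have comm: "\<forall>y \<in> carrier (TO W). \<phi>' (e y) = e (\<phi>' y)"
    if e: "linear_map R (TO W) (TO W) e"
      and ec: "\<forall>g \<in> Hom C W W. \<forall>y \<in> carrier (TO W). TM g (e y) = e (TM g y)" for e
  proof
    fix y assume y: "y \<in> carrier (TO W)"
    let ?eF = "\<lambda>p v. TM (\<pi> (idx p)) (e (TM (\<iota> (idx p)) v))"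
    have eF: "?eF \<in> End_TF R C TO TM F" using commutant_End_TF[OF B idx e ec] xs by simp
    have \<pi>y: "TM (\<pi> a) y \<in> carrier (TO X)" using T_closed[OF \<pi>a y] .
    have "\<phi>' (e y) = TM (\<iota> b) (\<phi> (?eF X (TM (\<pi> a) y)))"
      unfolding \<phi>'_def using biprod_commutant_out[OF B a(1) e ec y] a_def by simp
    also have "\<dots> = TM (\<iota> b) (?eF Y (\<phi> (TM (\<pi> a) y)))" using \<phi>F[OF eF \<pi>y] by simp
    also have "\<dots> = e (\<phi>' y)"
      unfolding \<phi>'_def using biprod_commutant_in[OF B b(1) e ec] linear_map_closed[OF F(5) \<pi>y] b b_def
      by simp
    finally show "\<phi>' (e y) = e (\<phi>' y)" .
  qed
  obtain g where g: "g \<in> Hom C W W" "\<And>y. y \<in> carrier (TO W) \<Longrightarrow> TM g y = \<phi>' y"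
    using double_centralizer[OF W lin comm] by blast
  have "TM (comp C (\<pi> b) (comp C g (\<iota> a))) v = \<phi> v" if v: "v \<in> carrier (TO X)" for v
  proof -
    have "TM (comp C (\<pi> b) (comp C g (\<iota> a))) v = TM (\<pi> b) (\<phi>' (TM (\<iota> a) v))"
      using T_comp[OF comp_hom[OF \<iota>a g(1)] \<pi>b v] T_comp[OF \<iota>a g(1) v] g(2)[OF T_closed[OF \<iota>a v]] by simp
    then show ?thesis
      unfolding \<phi>'_def using biprod_out_in[OF B a(1) a(1)] biprod_out_in[OF B b(1) b(1)] a(2) b(2) v
        linear_map_closed[OF F(5) v] by simp
  qed
  then show ?thesis using comp_hom[OF comp_hom[OF \<iota>a g(1)] \<pi>b] by blast
qed

end

theorem mainTheorem5:
  fixes R :: "('r, 'x) ring_scheme"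
    and C :: "('o, 'm, 'r) lincat"
    and TO :: "'o \<Rightarrow> ('r, 'v) module"
    and TM :: "'m \<Rightarrow> 'v \<Rightarrow> 'v"
  assumes "cring R" and "noetherian_ring R"
    and "is_abelian_R_linear_category R C"
    and "is_fiber_functor R C TO TM"
  shows "Ttilde_full R C TO TM"
proof -
  interpret noetherian_fiber_functor R C TO TM
    using assms by (simp add: noetherian_fiber_functor_def noetherian_fiber_functor_axioms_def
        abelian_fiber_functor_def)
  show ?thesis unfolding Ttilde_full_def using CT_hom_realized by blast
qed

end
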